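(* For every $t\ge0$ and $u\in[0,1]$, $$\mathbb E_{\mu_d,u}[\mathcal O_t(1-\mathcal O_t)]=u(1-u)\,\mathbb P_{\mu_d}(\tau^{\pi\otimes\pi}_{\rm meet}>t),\qquad \mathbb E_{\mu_d,u}[\mathcal D_t]=2u(1-u)\,\mathbb P_{\mu_d}(\tau^{\rm edge}_{\rm meet}>t),$$ and moreover $$\max_{\xi\in\{0,1\}^n}\mathbb E_{\mu_d,\xi}[\mathcal D_t]\le2\,\mathbb P_{\mu_d}(\tau^{\rm edge}_{\rm meet}>t).$$
   Context: Fix integers $d\ge3$, $n$ with $dn$ even, and $\nu>0$. Each vertex $x\in[n]$ carries $d$ stubs $\sigma_{x,1},\dots,\sigma_{x,d}$; a graph is a perfect matching of the $dn$ stubs; $\mathcal G_n(d)$ is the set of such matchings, $\mu_d$ the uniform distribution on it, ${\rm v}_G(x,i)$ the vertex owning the stub matched to $\sigma_{x,i}$ in $G$; write $\sigma_{x,i}\leftrightarrow_G\sigma_{y,j}$ if these stubs are matched in $G$. Rewiring dynamics $(G_t)$: for each ordered pair of distinct stubs $(\sigma_{x,i},\sigma_{y,j})$ not matched to each other, at rate $\frac\nu4\cdot\frac1{dn-1}$ the edges $\{\sigma_{x,i},\sigma_{z,k}\},\{\sigma_{y,j},\sigma_{v,\ell}\}$ are replaced by $\{\sigma_{x,i},\sigma_{y,j}\},\{\sigma_{z,k},\sigma_{v,\ell}\}$. Voter model: $(G_t,\eta_t)$ with $G_t$ following the rewiring dynamics and, for each $x$ and $1\le i\le d$, at rate $1/d$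 the opinion $\eta(x)$ is replaced by $\eta({\rm v}_{G_t}(x,i))$. $\mathbb P_{\mu_d,u}$: $G_0\sim\mu_d$ and independently $\eta_0$ i.i.d. Bernoulli$(u)$; $\mathbb P_{\mu_d,\xi}$: $G_0\sim\mu_d$ and $\eta_0=\xi$. $\mathcal O_t=\frac1n\sum_x\eta_t(x)$, $\mathcal D_t=\frac{2}{dn}\sum_x\eta_t(x)\sum_{i=1}^d(1-\eta_t({\rm v}_{G_t}(x,i)))$. Random walks: $(G_t,X_t,Y_t)$ where $G_t$ follows the rewiring dynamics and independently each of $X,Y$, at rate $1/d$ for each $i$, jumps from its position $x$ to ${\rm v}_{G_t}(x,i)$; $\tau^{x,y}_{\rm meet}=\inf\{s\ge0:X_s=Y_s\}$ for $X_0=x,Y_0=y$; under $\mathbb P_{\mu_d}$, $G_0\sim\mu_d$. $\tau^{\pi\otimes\pi}_{\rm meet}$ is the meeting time when $X_0,Y_0$ are independent uniform on $[n]$ (independent of $G_0$); $\tau^{\rm edge}_{\rm meet}$ is the meeting time when the walks start at the two endpoints of the edge of $G_0$ containing a uniformly chosen stub, i.e. $\mathbb P_{\mu_d}(\tau^{\rm edge}_{\rm meet}>t)=\frac{1}{dn}\sum_{x\ne y}\sum_{i,j=1}^d\mathbb P_{\mu_d}(\sigma_{x,i}\leftrightarrow_{G_0}\sigma_{y,j},\ \tau^{x,y}_{\rm meet}>t)$. *)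

theory Defs
  imports "HOL-Analysis.Analysis"
begin

text \<open>Stubs are pairs (x, i) with x < n (vertex) and i < d (stub index, 0-based).
  A graph is a perfect matching of the stubs, encoded as a fixed-point-free involution
  on the stub set (and the identity outside it).\<close>

type_synonym stub = "nat \<times> nat"
type_synonym graph = "stub \<Rightarrow> stub"

definition stubs :: "nat \<Rightarrow> nat \<Rightarrow> stub set" where
  "stubs n d = {0..<n} \<times> {0..<d}"

definition graphs :: "nat \<Rightarrow> nat \<Rightarrow> graph set" where
  "graphs n d = {G. (\<forall>s\<in>stubs n d. G s \<in> stubs n d \<and> G s \<noteq> s \<and> G (G s) = s)
                    \<and> (\<forall>s. s \<notin> stubs n d \<longrightarrow> G s = s)}"

definition nbr :: "graph \<Rightarrow> nat \<Rightarrow> nat \<Rightarrow> nat" where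
  "nbr G x i = fst (G (x, i))"

text \<open>Rewiring move for the ordered pair of stubs (a, b): edges {a, G a}, {b, G b}
  are replaced by {a, b}, {G a, G b}.\<close>
definition rewire :: "graph \<Rightarrow> stub \<Rightarrow> stub \<Rightarrow> graph" where
  "rewire G a b = (let c = G a; e = G b in G(a := b, b := a, c := e, e := c))"

text \<open>Transition semigroup e^{tL} of a continuous-time Markov chain with generator L
  (acting on observables), applied to the observable f and evaluated at the state s:
  this is E_s[f(Z_t)].\<close>
definition semigroup :: "(('s \<Rightarrow> real) \<Rightarrow> ('s \<Rightarrow> real)) \<Rightarrow> real \<Rightarrow> ('s \<Rightarrow> real) \<Rightarrow> 's \<Rightarrow> real" where
  "semigroup L t f s = (\<Sum>k. t ^ k / fact k * (L ^^ k) f s)"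

definition rewire_gen :: "nat \<Rightarrow> nat \<Rightarrow> real \<Rightarrow> (graph \<times> 'a \<Rightarrow> real) \<Rightarrow> graph \<times> 'a \<Rightarrow> real" where
  "rewire_gen n d \<nu> f = (\<lambda>(G, z).
      \<Sum>a\<in>stubs n d. \<Sum>b\<in>stubs n d - {a, G a}.
         (\<nu> / 4) / (real (d * n) - 1) * (f (rewire G a b, z) - f (G, z)))"

definition voter_gen :: "nat \<Rightarrow> nat \<Rightarrow> real \<Rightarrow> (graph \<times> (nat \<Rightarrow> bool) \<Rightarrow> real)
                          \<Rightarrow> graph \<times> (nat \<Rightarrow> bool) \<Rightarrow> real" where
  "voter_gen n d \<nu> f = (\<lambda>(G, \<eta>).
      rewire_gen n d \<nu> f (G, \<eta>)
      + (\<Sum>x<n. \<Sum>i<d. (1 / real d) * (f (G, \<eta>(x := \<eta> (nbr G x i))) - f (G, \<eta>))))"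

text \<open>For the law of the meeting time only the stopped process
  matters: P(tau_meet > t) = P(X_t /= Y_t) for the stopped process.\<close>
definition walk_stop_gen :: "nat \<Rightarrow> nat \<Rightarrow> real \<Rightarrow> (graph \<times> (nat \<times> nat) \<Rightarrow> real)
                          \<Rightarrow> graph \<times> (nat \<times> nat) \<Rightarrow> real" where
  "walk_stop_gen n d \<nu> f = (\<lambda>(G, (X, Y)).
      rewire_gen n d \<nu> f (G, (X, Y))
      + (if X = Y then 0 else
           (\<Sum>i<d. (1 / real d) * (f (G, (nbr G X i, Y)) - f (G, (X, Y))))
         + (\<Sum>i<d. (1 / real d) * (f (G, (X, nbr G Y i)) - f (G, (X, Y))))))"

definition meet_tail :: "nat \<Rightarrow> nat \<Rightarrow> real \<Rightarrow> real \<Rightarrow> graph \<Rightarrow> nat \<Rightarrow> nat \<Rightarrow> real" where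
  "meet_tail n d \<nu> t G x y =
     semigroup (walk_stop_gen n d \<nu>) t (\<lambda>(G', (X, Y)). if X \<noteq> Y then 1 else 0) (G, (x, y))"

definition avg_mu :: "nat \<Rightarrow> nat \<Rightarrow> (graph \<Rightarrow> real) \<Rightarrow> real" where
  "avg_mu n d F = (\<Sum>G\<in>graphs n d. F G) / real (card (graphs n d))"

definition meet_tail_pi :: "nat \<Rightarrow> nat \<Rightarrow> real \<Rightarrow> real \<Rightarrow> real" where
  "meet_tail_pi n d \<nu> t = avg_mu n d (\<lambda>G.
      (\<Sum>x<n. \<Sum>y<n. meet_tail n d \<nu> t G x y) / (real n) ^ 2)"

definition meet_tail_edge :: "nat \<Rightarrow> nat \<Rightarrow> real \<Rightarrow> real \<Rightarrow> real" where
  "meet_tail_edge n d \<nu> t =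
     (1 / real (d * n)) * (\<Sum>x<n. \<Sum>y\<in>{..<n} - {x}. \<Sum>i<d. \<Sum>j<d.
        avg_mu n d (\<lambda>G. if G (x, i) = (y, j) then meet_tail n d \<nu> t G x y else 0))"

text \<open>Opinion configurations {0,1}^n (True = opinion 1), False outside [n].\<close>
definition configs :: "nat \<Rightarrow> (nat \<Rightarrow> bool) set" where
  "configs n = {\<xi>. \<forall>x. \<xi> x \<longrightarrow> x < n}"

definition opinion_density :: "nat \<Rightarrow> (nat \<Rightarrow> bool) \<Rightarrow> real" where
  "opinion_density n \<eta> = (\<Sum>x<n. if \<eta> x then 1 else 0) / real n"

definition discordance :: "nat \<Rightarrow> nat \<Rightarrow> graph \<Rightarrow> (nat \<Rightarrow> bool) \<Rightarrow> real" where
  "discordance n d G \<eta> = 2 / real (d * n) *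
     (\<Sum>x<n. (if \<eta> x then 1 else 0) * (\<Sum>i<d. if \<eta> (nbr G x i) then 0 else 1))"

definition voter_exp_xi :: "nat \<Rightarrow> nat \<Rightarrow> real \<Rightarrow> real \<Rightarrow> (nat \<Rightarrow> bool)
                           \<Rightarrow> (graph \<times> (nat \<Rightarrow> bool) \<Rightarrow> real) \<Rightarrow> real" where
  "voter_exp_xi n d \<nu> t \<xi> F = avg_mu n d (\<lambda>G. semigroup (voter_gen n d \<nu>) t F (G, \<xi>))"

definition voter_exp_u :: "nat \<Rightarrow> nat \<Rightarrow> real \<Rightarrow> real \<Rightarrow> real
                           \<Rightarrow> (graph \<times> (nat \<Rightarrow> bool) \<Rightarrow> real) \<Rightarrow> real" where
  "voter_exp_u n d \<nu> t u F = (\<Sum>\<xi>\<in>configs n.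
      u ^ card {x\<in>{..<n}. \<xi> x} * (1 - u) ^ card {x\<in>{..<n}. \<not> \<xi> x}
      * voter_exp_xi n d \<nu> t \<xi> F)"

end

(* Both observables are linear combinations of the disagreement indicators [eta x /= eta y].
   For H((G, eta), (G', x, y)) = [G = G'] [eta x /= eta y], the voter generator acting on the first
   argument of H equals the generator of the pair of walks, stopped when they meet, acting on the
   second: rewiring is symmetric (there are as many moves from G to G' as from G' to G), and copying
   the opinion of the neighbour of x along stub i changes the disagreement of x and y exactly as the
   walk at x jumping along that stub does. Passing this duality through the exponential series of the
   bounded generators and averaging over the uniform initial graph turns E[eta_t x /= eta_t y] into
   the expected disagreement of the initial configuration at the positions of the stopped walks at
   time t. For i.i.d. Bernoulli(u) initial opinions this is 2u(1-u) P(tau_meet > t), and for any fixed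
   initial configuration it is at most P(tau_meet > t). *)

theory Submission
  imports Defs
begin

section \<open>Exponential series of bounded linear operators\<close>

definition linear_op :: "(('s \<Rightarrow> real) \<Rightarrow> 's \<Rightarrow> real) \<Rightarrow> bool" where
  "linear_op L \<longleftrightarrow> (\<forall>a b f g. L (\<lambda>s. a * f s + b * g s) = (\<lambda>s. a * L f s + b * L g s))"

definition bounded_op :: "(('s \<Rightarrow> real) \<Rightarrow> 's \<Rightarrow> real) \<Rightarrow> real \<Rightarrow> bool" where
  "bounded_op L C \<longleftrightarrow> (\<forall>f B. (\<forall>s. \<bar>f s\<bar> \<le> B) \<longrightarrow> (\<forall>s. \<bar>L f s\<bar> \<le> C * B))"

definition local_op :: "(('s \<Rightarrow> real) \<Rightarrow> 's \<Rightarrow> real) \<Rightarrow> 's set \<Rightarrow> bool" where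
  "local_op L T \<longleftrightarrow> (\<forall>f g. (\<forall>s\<in>T. f s = g s) \<longrightarrow> (\<forall>s\<in>T. L f s = L g s))"

lemma linear_opI:
  "(\<And>a b f g s. L (\<lambda>s. a * f s + b * g s) s = a * L f s + b * L g s) \<Longrightarrow> linear_op L"
  unfolding linear_op_def by blast

lemma linear_op_add: "linear_op L \<Longrightarrow> L (\<lambda>s. f s + g s) = (\<lambda>s. L f s + L g s)"
  unfolding linear_op_def by (drule spec[of _ 1], drule spec[of _ 1]) simp

lemma linear_op_cmult: "linear_op L \<Longrightarrow> L (\<lambda>s. a * f s) = (\<lambda>s. a * L f s)"
  unfolding linear_op_def by (drule spec[of _ a], drule spec[of _ 0]) simp

lemma linear_op_diff: "linear_op L \<Longrightarrow> L (\<lambda>s. f s - g s) = (\<lambda>s. L f s - L g s)"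
  unfolding linear_op_def by (drule spec[of _ 1], drule spec[of _ "-1"]) simp

lemma linear_op_divide: "linear_op L \<Longrightarrow> L (\<lambda>s. f s / c) = (\<lambda>s. L f s / c)"
  using linear_op_cmult[of L "inverse c" f] by (simp add: divide_inverse mult.commute)

lemma linear_op_sum: "linear_op L \<Longrightarrow> L (\<lambda>s. \<Sum>i\<in>I. F i s) = (\<lambda>s. \<Sum>i\<in>I. L (F i) s)"
proof (induction I rule: infinite_finite_induct)
  case (insert x J)
  then show ?case using linear_op_add[of L "F x" "\<lambda>s. \<Sum>i\<in>J. F i s"] by simp
qed (use linear_op_cmult[of L 0 "\<lambda>s. 0"] in simp_all)

lemma linear_op_funpow: "linear_op L \<Longrightarrow> linear_op (L ^^ k)"
  by (induction k) (simp_all add: linear_op_def)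

lemma linear_op_shift: "linear_op L \<Longrightarrow> linear_op (\<lambda>g s. L g s + l * g s)"
  unfolding linear_op_def by (auto simp: algebra_simps fun_eq_iff)

lemma bounded_op_funpow:
  assumes "bounded_op L C" and "\<forall>s. \<bar>f s\<bar> \<le> B"
  shows "\<bar>(L ^^ k) f s\<bar> \<le> C ^ k * B"
proof (induction k arbitrary: s)
  case (Suc k)
  then have "\<bar>L ((L ^^ k) f) s\<bar> \<le> C * (C ^ k * B)"
    using assms(1) unfolding bounded_op_def by blast
  then show ?case by (simp add: mult.assoc)
qed (use assms(2) in simp)

lemma bounded_op_shift:
  assumes "bounded_op L C" and "0 \<le> l"
  shows "bounded_op (\<lambda>g s. L g s + l * g s) (C + l)"
  unfolding bounded_op_def
proof (intro allI impI)
  fix g :: "'a \<Rightarrow> real" and B s assume g: "\<forall>s. \<bar>g s\<bar> \<le> B"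
  have "\<bar>L g s\<bar> \<le> C * B" using assms(1) g unfolding bounded_op_def by blast
  moreover have "\<bar>l * g s\<bar> \<le> l * B" using g assms(2) by (simp add: abs_mult mult_left_mono)
  ultimately show "\<bar>L g s + l * g s\<bar> \<le> (C + l) * B" by (simp add: algebra_simps)
qed

lemma local_op_funpow:
  assumes "local_op L T" and "\<forall>s\<in>T. f s = g s" and "s \<in> T"
  shows "(L ^^ k) f s = (L ^^ k) g s"
  using assms(3)
proof (induction k arbitrary: s)
  case (Suc k)
  then show ?case using assms(1) unfolding local_op_def by simp
qed (use assms(2) in simp)

lemma semigroup_local:
  "local_op L T \<Longrightarrow> \<forall>s\<in>T. f s = g s \<Longrightarrow> s \<in> T \<Longrightarrow> semigroup L t f s = semigroup L t g s"
  unfolding semigroup_def using local_op_funpow[of L T f g s] by simp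

text \<open>The binomial expansion of \<open>L\<^sup>k = (Q - l)\<^sup>k\<close> for \<open>Q = L + l\<close>, which commutes with \<open>l\<close>.\<close>

lemma binomial_shift_step:
  fixes q :: "nat \<Rightarrow> real"
  shows "(\<Sum>j\<le>k. of_nat (k choose j) * (-l) ^ (k - j) * (q (Suc j) - l * q j))
       = (\<Sum>j\<le>Suc k. of_nat (Suc k choose j) * (-l) ^ (Suc k - j) * q j)"
proof -
  define g where "g j = of_nat (k choose j) * (-l) ^ (Suc k - j) * q j" for j
  have "(\<Sum>j\<le>Suc k. g j) = g 0 + (\<Sum>j\<le>k. g (Suc j))"
    by (rule sum.atMost_Suc_shift)
  moreover have "(\<Sum>j\<le>Suc k. g j) = (\<Sum>j\<le>k. g j)"
    by (simp add: g_def)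
  ultimately have g_shift: "(\<Sum>j\<le>k. g j) = g 0 + (\<Sum>j\<le>k. g (Suc j))"
    by simp
  have lhs: "(\<Sum>j\<le>k. of_nat (k choose j) * (-l) ^ (k - j) * (q (Suc j) - l * q j))
      = (\<Sum>j\<le>k. of_nat (k choose j) * (-l) ^ (k - j) * q (Suc j)) + (\<Sum>j\<le>k. g j)"
    unfolding g_def sum.distrib[symmetric]
    by (intro sum.cong refl) (simp add: Suc_diff_le algebra_simps)
  have rhs: "(\<Sum>j\<le>Suc k. of_nat (Suc k choose j) * (-l) ^ (Suc k - j) * q j)
      = of_nat (Suc k choose 0) * (-l) ^ (Suc k - 0) * q 0
        + (\<Sum>j\<le>k. of_nat (Suc k choose Suc j) * (-l) ^ (Suc k - Suc j) * q (Suc j))"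
    by (rule sum.atMost_Suc_shift)
  have pascal: "(\<Sum>j\<le>k. of_nat (Suc k choose Suc j) * (-l) ^ (Suc k - Suc j) * q (Suc j))
      = (\<Sum>j\<le>k. of_nat (k choose j) * (-l) ^ (k - j) * q (Suc j)) + (\<Sum>j\<le>k. g (Suc j))"
    unfolding g_def sum.distrib[symmetric]
    by (intro sum.cong refl) (simp add: algebra_simps)
  show ?thesis unfolding lhs g_shift rhs pascal by (simp add: g_def)
qed

lemma funpow_binomial_shift:
  assumes "linear_op L"
  shows "(L ^^ k) f = (\<lambda>s. \<Sum>j\<le>k. of_nat (k choose j) * (-l) ^ (k - j)
            * ((\<lambda>g s. L g s + l * g s) ^^ j) f s)"
proof (induction k)
  case (Suc k)
  let ?Q = "\<lambda>g s. L g s + l * g s"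
  have "(L ^^ Suc k) f = (\<lambda>s. \<Sum>j\<le>k. of_nat (k choose j) * (-l) ^ (k - j) * L ((?Q ^^ j) f) s)"
    using linear_op_sum[OF assms, of "\<lambda>j s. of_nat (k choose j) * (-l) ^ (k - j) * (?Q ^^ j) f s" "{..k}"]
      linear_op_cmult[OF assms] by (simp add: Suc)
  also have "\<dots> = (\<lambda>s. \<Sum>j\<le>k. of_nat (k choose j) * (-l) ^ (k - j)
        * ((?Q ^^ Suc j) f s - l * (?Q ^^ j) f s))"
    by simp
  also have "\<dots> = (\<lambda>s. \<Sum>j\<le>Suc k. of_nat (Suc k choose j) * (-l) ^ (Suc k - j) * (?Q ^^ j) f s)"
    by (rule ext) (rule binomial_shift_step)
  finally show ?case .
qed simp

lemma series_term_binomial_shift: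
  assumes "linear_op L"
  shows "t ^ k / fact k * (L ^^ k) f s
       = (\<Sum>i\<le>k. (t ^ i / fact i * ((\<lambda>g s. L g s + l * g s) ^^ i) f s) * ((- l * t) ^ (k - i) / fact (k - i)))"
proof -
  let ?Q = "\<lambda>g s. L g s + l * g s"
  have "t ^ k / fact k * (L ^^ k) f s
      = (\<Sum>i\<le>k. t ^ k / fact k * (of_nat (k choose i) * (-l) ^ (k - i) * (?Q ^^ i) f s))"
    unfolding funpow_binomial_shift[OF assms, of k f l] by (simp add: sum_distrib_left)
  also have "\<dots> = (\<Sum>i\<le>k. (t ^ i / fact i * (?Q ^^ i) f s) * ((- l * t) ^ (k - i) / fact (k - i)))"
  proof (intro sum.cong refl)
    fix i assume "i \<in> {..k}"
    then have ik: "i \<le> k" by simp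
    have tk: "t ^ k = t ^ i * t ^ (k - i)" using ik by (simp flip: power_add)
    have "(- l * t) ^ m = (-l) ^ m * t ^ m" for m :: nat
      by (rule power_mult_distrib)
    then show "t ^ k / fact k * (of_nat (k choose i) * (-l) ^ (k - i) * (?Q ^^ i) f s)
        = (t ^ i / fact i * (?Q ^^ i) f s) * ((- l * t) ^ (k - i) / fact (k - i))"
      unfolding binomial_fact[OF ik] tk by (simp add: field_simps)
  qed
  finally show ?thesis .
qed

locale bounded_generator =
  fixes L :: "('s \<Rightarrow> real) \<Rightarrow> 's \<Rightarrow> real" and C :: real
  assumes linear: "linear_op L" and bounded: "bounded_op L C" and bound_nonneg: "0 \<le> C"
begin

lemma summable_norm_semigroup_series:
  assumes "\<forall>s. \<bar>f s\<bar> \<le> B"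
  shows "summable (\<lambda>k. norm (t ^ k / fact k * (L ^^ k) f s))"
proof (rule summable_comparison_test')
  show "summable (\<lambda>k. B * (inverse (fact k) * (\<bar>t\<bar> * C) ^ k))"
    by (rule summable_mult[OF summable_exp])
  fix k
  have "norm (norm (t ^ k / fact k * (L ^^ k) f s)) = \<bar>t\<bar> ^ k / fact k * \<bar>(L ^^ k) f s\<bar>"
    by (simp add: abs_mult power_abs)
  also have "\<dots> \<le> \<bar>t\<bar> ^ k / fact k * (C ^ k * B)"
    by (rule mult_left_mono[OF bounded_op_funpow[OF bounded assms]]) simp
  also have "\<dots> = B * (inverse (fact k) * (\<bar>t\<bar> * C) ^ k)"
    by (simp only: power_mult_distrib divide_inverse mult_ac)
  finally show "norm (norm (t ^ k / fact k * (L ^^ k) f s)) \<le> B * (inverse (fact k) * (\<bar>t\<bar> * C) ^ k)" .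
qed

lemma summable_semigroup_series:
  assumes "bounded (range f)"
  shows "summable (\<lambda>k. t ^ k / fact k * (L ^^ k) f s)"
proof -
  obtain B where "\<forall>s. \<bar>f s\<bar> \<le> B" using assms by (auto simp: bounded_iff)
  then show ?thesis by (rule summable_norm_cancel[OF summable_norm_semigroup_series])
qed

lemma semigroup_sum:
  assumes "finite I" and "\<And>i. i \<in> I \<Longrightarrow> bounded (range (F i))"
  shows "semigroup L t (\<lambda>s. \<Sum>i\<in>I. c i * F i s) s = (\<Sum>i\<in>I. c i * semigroup L t (F i) s)"
proof -
  have "(L ^^ k) (\<lambda>s. \<Sum>i\<in>I. c i * F i s) s = (\<Sum>i\<in>I. c i * (L ^^ k) (F i) s)" for k
    using linear_op_sum[OF linear_op_funpow[OF linear], of k "\<lambda>i s. c i * F i s" I]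
      linear_op_cmult[OF linear_op_funpow[OF linear]] by simp
  then have "semigroup L t (\<lambda>s. \<Sum>i\<in>I. c i * F i s) s
      = (\<Sum>k. \<Sum>i\<in>I. c i * (t ^ k / fact k * (L ^^ k) (F i) s))"
    unfolding semigroup_def by (simp add: sum_distrib_left mult_ac)
  also have "\<dots> = (\<Sum>i\<in>I. \<Sum>k. c i * (t ^ k / fact k * (L ^^ k) (F i) s))"
    using assms by (intro suminf_sum summable_mult summable_semigroup_series)
  also have "\<dots> = (\<Sum>i\<in>I. c i * semigroup L t (F i) s)"
    unfolding semigroup_def using assms
    by (intro sum.cong refl suminf_mult summable_semigroup_series)
  finally show ?thesis .
qed

lemma semigroup_cmult:
  "bounded (range f) \<Longrightarrow> semigroup L t (\<lambda>s. c * f s) s = c * semigroup L t f s"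
  using semigroup_sum[of "{()}" "\<lambda>_. f" t "\<lambda>_. c" s] by simp

lemma semigroup_diff:
  assumes "bounded (range f)" and "bounded (range g)"
  shows "semigroup L t (\<lambda>s. f s - g s) s = semigroup L t f s - semigroup L t g s"
  using semigroup_sum[of "{True, False}" "\<lambda>b. if b then f else g" t "\<lambda>b. if b then 1 else -1" s]
    assms by simp

text \<open>If \<open>L + l\<close> preserves nonnegativity, then \<open>exp (t L) = exp (- l t) exp (t (L + l))\<close>
  writes the series as a Cauchy product of two series with nonnegative sums.\<close>

lemma semigroup_nonneg:
  assumes l: "0 \<le> l" and shift_nonneg: "\<And>g s. \<forall>s. 0 \<le> g s \<Longrightarrow> 0 \<le> L g s + l * g s"
    and f: "\<forall>s. 0 \<le> f s" "bounded (range f)" and t: "0 \<le> t"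
  shows "0 \<le> semigroup L t f s"
proof -
  define Q where "Q = (\<lambda>g s. L g s + l * g s)"
  interpret Q: bounded_generator Q "C + l"
    unfolding Q_def using linear_op_shift[OF linear] bounded_op_shift[OF bounded l] bound_nonneg l
    by unfold_locales simp_all
  define a where "a i = t ^ i / fact i * (Q ^^ i) f s" for i
  define b where "b i = (- l * t) ^ i / fact i" for i
  have Q_nonneg: "\<forall>s. 0 \<le> (Q ^^ i) f s" for i
    by (induction i) (simp_all add: f Q_def shift_nonneg)
  obtain B where "\<forall>s. \<bar>f s\<bar> \<le> B" using f(2) by (auto simp: bounded_iff)
  then have a_summable: "summable (\<lambda>i. norm (a i))"
    unfolding a_def by (rule Q.summable_norm_semigroup_series)
  have "norm (b i) = inverse (fact i) * (l * t) ^ i" for i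
    unfolding b_def using l t by (simp add: abs_mult power_abs divide_simps power_minus')
  then have b_summable: "summable (\<lambda>i. norm (b i))"
    using summable_exp[of "l * t"] by simp
  have "semigroup L t f s = (\<Sum>k. \<Sum>i\<le>k. a i * b (k - i))"
    unfolding semigroup_def a_def b_def Q_def series_term_binomial_shift[OF linear, where l = l] ..
  also have "\<dots> = (\<Sum>i. a i) * (\<Sum>i. b i)"
    using Cauchy_product[OF a_summable b_summable] by simp
  also have "(\<Sum>i. b i) = exp (- l * t)"
    using sums_unique[OF exp_converges[of "- l * t"]] unfolding b_def by (simp add: divide_inverse mult.commute)
  finally show ?thesis
    using a_summable Q_nonneg t unfolding a_def
    by (simp add: suminf_nonneg summable_norm_cancel)
qed

end

section \<open>Matchings and rewiring moves\<close>

lemma finite_stubs: "finite (stubs n d)"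
  by (simp add: stubs_def)

lemma card_stubs: "card (stubs n d) = d * n"
  by (simp add: stubs_def)

lemma mem_stubs_iff: "(x, i) \<in> stubs n d \<longleftrightarrow> x < n \<and> i < d"
  by (simp add: stubs_def)

lemma sum_stubs_eq: "(\<Sum>s\<in>stubs n d. h (fst s) (snd s)) = (\<Sum>x<n. \<Sum>i<d. h x i)"
  by (simp add: stubs_def sum.cartesian_product split_def atLeast0LessThan)

lemma graphsD:
  assumes "G \<in> graphs n d"
  shows "\<And>s. s \<in> stubs n d \<Longrightarrow> G s \<in> stubs n d" and "\<And>s. s \<in> stubs n d \<Longrightarrow> G s \<noteq> s"
    and "\<And>s. s \<notin> stubs n d \<Longrightarrow> G s = s"
  using assms unfolding graphs_def by auto

lemma graph_involution:
  assumes "G \<in> graphs n d"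
  shows "G (G s) = s"
proof (cases "s \<in> stubs n d")
  case True
  then show ?thesis using assms unfolding graphs_def by blast
next
  case False
  then have "G s = s" by (rule graphsD(3)[OF assms])
  then show ?thesis by simp
qed

lemma graph_bij_betw_stubs: "G \<in> graphs n d \<Longrightarrow> bij_betw G (stubs n d) (stubs n d)"
  by (rule bij_betw_byWitness[where f' = G]) (auto simp: graphsD graph_involution)

lemma nbr_less: "G \<in> graphs n d \<Longrightarrow> x < n \<Longrightarrow> i < d \<Longrightarrow> nbr G x i < n"
  unfolding nbr_def using graphsD(1)[of G n d "(x, i)"] by (auto simp: stubs_def)

lemma finite_graphs: "finite (graphs n d)"
proof -
  let ?St = "stubs n d"
  let ?restrict = "\<lambda>G s. if s \<in> ?St then G s else undefined"
  have "?restrict ` graphs n d \<subseteq> {f. \<forall>x. (x \<in> ?St \<longrightarrow> f x \<in> ?St) \<and> (x \<notin> ?St \<longrightarrow> f x = undefined)}"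
    by (auto simp: graphsD(1))
  then have "finite (?restrict ` graphs n d)"
    by (rule finite_subset) (intro finite_set_of_finite_funs finite_stubs)
  moreover have "inj_on ?restrict (graphs n d)"
  proof (rule inj_onI, rule ext)
    fix G H s assume "G \<in> graphs n d" "H \<in> graphs n d" "?restrict G = ?restrict H"
    then show "G s = H s"
      using fun_cong[of "?restrict G" "?restrict H" s] by (auto simp: graphsD(3) split: if_splits)
  qed
  ultimately show ?thesis by (rule finite_imageD)
qed

context
  fixes n d :: nat and G :: graph and a b :: stub
  assumes G: "G \<in> graphs n d" and a: "a \<in> stubs n d" and b: "b \<in> stubs n d - {a, G a}"
begin

lemma rewire_stubs:
  shows "b \<in> stubs n d" "G a \<in> stubs n d" "G b \<in> stubs n d"
    and "b \<noteq> a" "G a \<noteq> a" "G b \<noteq> b" "G a \<noteq> b" "G b \<noteq> a" "G a \<noteq> G b"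
  using a b graphsD(1,2)[OF G] graph_involution[OF G] by (auto, metis+)

lemma rewire_eq: "rewire G a b = G(a := b, b := a, G a := G b, G b := G a)"
  unfolding rewire_def Let_def ..

lemma rewire_matches: "rewire G a b a = b"
  unfolding rewire_eq using rewire_stubs by simp

lemma rewire_in_graphs: "rewire G a b \<in> graphs n d"
proof -
  have others: "G s \<notin> {a, b, G a, G b}" if "s \<notin> {a, b, G a, G b}" for s
    using that graph_involution[OF G, of s] graph_involution[OF G, of a] graph_involution[OF G, of b]
    by auto
  show ?thesis
    unfolding rewire_eq graphs_def
  proof (intro CollectI conjI ballI allI impI)
    fix s assume s: "s \<in> stubs n d"
    show "(G(a := b, b := a, G a := G b, G b := G a)) s \<in> stubs n d"
      using s a rewire_stubs graphsD(1)[OF G s] by auto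
    show "(G(a := b, b := a, G a := G b, G b := G a)) s \<noteq> s"
      using graphsD(2)[OF G s] rewire_stubs by auto
    show "(G(a := b, b := a, G a := G b, G b := G a)) ((G(a := b, b := a, G a := G b, G b := G a)) s) = s"
      using others[of s] graph_involution[OF G, of s] rewire_stubs by (cases "s \<in> {a, b, G a, G b}") auto
  next
    fix s assume "s \<notin> stubs n d"
    then show "(G(a := b, b := a, G a := G b, G b := G a)) s = s"
      using a rewire_stubs graphsD(3)[OF G] by auto
  qed
qed

lemma rewire_undo: "rewire (rewire G a b) a (G a) = G"
proof
  fix s
  have "rewire G a b a = b" "rewire G a b (G a) = G b" using rewire_stubs by (simp_all add: rewire_eq)
  then have "rewire (rewire G a b) a (G a) = (G(a := b, b := a, G a := G b, G b := G a))(a := G a, G a := a, b := G b, G b := b)"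
    unfolding rewire_def Let_def by (simp only: rewire_eq)
  then show "rewire (rewire G a b) a (G a) s = G s"
    using rewire_stubs graph_involution[OF G, of a] graph_involution[OF G, of b]
    by (cases "s = a"; cases "s = b"; cases "s = G a"; cases "s = G b") auto
qed

end

definition rewire_pairs :: "nat \<Rightarrow> nat \<Rightarrow> graph \<Rightarrow> (stub \<times> stub) set" where
  "rewire_pairs n d G = Sigma (stubs n d) (\<lambda>a. stubs n d - {a, G a})"

lemma card_rewire_pairs_le: "card (rewire_pairs n d G) \<le> (d * n) ^ 2"
proof -
  have "rewire_pairs n d G \<subseteq> stubs n d \<times> stubs n d" by (auto simp: rewire_pairs_def)
  then have "card (rewire_pairs n d G) \<le> card (stubs n d \<times> stubs n d)"
    by (intro card_mono) (simp_all add: finite_stubs)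
  then show ?thesis by (simp add: card_cartesian_product card_stubs power2_eq_square)
qed

lemma rewire_pair_in_graphs:
  "G \<in> graphs n d \<Longrightarrow> p \<in> rewire_pairs n d G \<Longrightarrow> rewire G (fst p) (snd p) \<in> graphs n d"
  by (cases p) (simp add: rewire_pairs_def rewire_in_graphs)

definition rewire_moves :: "nat \<Rightarrow> nat \<Rightarrow> graph \<Rightarrow> graph \<Rightarrow> (stub \<times> stub) set" where
  "rewire_moves n d G G' = {p \<in> rewire_pairs n d G. rewire G (fst p) (snd p) = G'}"

text \<open>The move \<open>(a, b)\<close> from \<open>G\<close> to \<open>G'\<close> is undone by the move \<open>(a, G a)\<close> from \<open>G'\<close>, and \<open>b = G' a\<close>
  is determined by \<open>a\<close>.\<close>

lemma card_rewire_moves_le: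
  assumes G: "G \<in> graphs n d"
  shows "card (rewire_moves n d G G') \<le> card (rewire_moves n d G' G)"
proof (rule card_inj_on_le)
  have move: "a \<in> stubs n d" "b \<in> stubs n d - {a, G a}" "rewire G a b = G'"
    if "(a, b) \<in> rewire_moves n d G G'" for a b
    using that unfolding rewire_moves_def rewire_pairs_def by simp_all
  show "inj_on (\<lambda>(a, b). (a, G a)) (rewire_moves n d G G')"
  proof (rule inj_onI)
    fix p q assume p: "p \<in> rewire_moves n d G G'" and q: "q \<in> rewire_moves n d G G'"
      and eq: "(\<lambda>(a, b). (a, G a)) p = (\<lambda>(a, b). (a, G a)) q"
    obtain a b a' b' where pq: "p = (a, b)" "q = (a', b')" by (cases p, cases q)
    have "a' = a" using eq pq by simp
    have "b = G' a" using move[OF p[unfolded pq(1)]] rewire_matches[OF G] by metis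
    moreover have "b' = G' a" using move[OF q[unfolded pq(2) \<open>a' = a\<close>]] rewire_matches[OF G] by metis
    ultimately show "p = q" using pq \<open>a' = a\<close> by simp
  qed
  show "(\<lambda>(a, b). (a, G a)) ` rewire_moves n d G G' \<subseteq> rewire_moves n d G' G"
  proof (rule image_subsetI)
    fix p assume p: "p \<in> rewire_moves n d G G'"
    obtain a b where ab_def: "p = (a, b)" by (cases p)
    note ab = move[OF p[unfolded ab_def]]
    then show "(\<lambda>(a, b). (a, G a)) p \<in> rewire_moves n d G' G"
      unfolding ab_def
      using graphsD(1,2)[OF G] rewire_matches[OF G ab(1,2)] rewire_undo[OF G ab(1,2)]
      by (auto simp: rewire_moves_def rewire_pairs_def)
  qed
  show "finite (rewire_moves n d G' G)"
    by (rule finite_subset[of _ "stubs n d \<times> stubs n d"])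
      (auto simp: rewire_moves_def rewire_pairs_def finite_stubs)
qed

lemma card_rewire_moves_sym:
  "G \<in> graphs n d \<Longrightarrow> G' \<in> graphs n d \<Longrightarrow> card (rewire_moves n d G G') = card (rewire_moves n d G' G)"
  using card_rewire_moves_le le_antisym by metis

lemma sum_rewire_indicator:
  "(\<Sum>p\<in>rewire_pairs n d G. if rewire G (fst p) (snd p) = G' then c else 0) = real (card (rewire_moves n d G G')) * c"
proof -
  have "finite (rewire_pairs n d G)" by (simp add: rewire_pairs_def finite_stubs)
  then show ?thesis
    using sum.inter_filter[of "rewire_pairs n d G" "\<lambda>_. c"] by (simp add: rewire_moves_def)
qed

lemma abs_sum_jumps_le:
  fixes f :: "'s \<Rightarrow> real"
  assumes "0 \<le> r" and "\<forall>s. \<bar>f s\<bar> \<le> B"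
  shows "\<bar>\<Sum>i\<in>I. r * (f (h i) - f q)\<bar> \<le> real (card I) * r * (2 * B)"
proof -
  have "\<bar>r * (f (h i) - f q)\<bar> \<le> r * (2 * B)" for i
    using assms(2)[rule_format, of "h i"] assms(2)[rule_format, of q] assms(1)
    by (simp add: abs_mult mult_left_mono)
  then have "\<bar>\<Sum>i\<in>I. r * (f (h i) - f q)\<bar> \<le> real (card I) * (r * (2 * B))"
    by (intro order_trans[OF sum_abs] sum_bounded_above)
  then show ?thesis by (simp add: mult.assoc)
qed

lemma sum_jumps_shift_nonneg:
  fixes f :: "'s \<Rightarrow> real"
  assumes "0 \<le> r" and "\<forall>s. 0 \<le> f s"
  shows "0 \<le> (\<Sum>i\<in>I. r * (f (h i) - f q)) + real (card I) * r * f q"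
proof -
  have "(\<Sum>i\<in>I. - (r * f q)) \<le> (\<Sum>i\<in>I. r * (f (h i) - f q))"
    using assms by (intro sum_mono) (simp add: right_diff_distrib)
  then show ?thesis by simp
qed

lemma sum_jumps_linear:
  fixes r a b :: real
  shows "(\<Sum>i\<in>I. r * ((a * F i + b * H i) - (a * F0 + b * H0)))
     = a * (\<Sum>i\<in>I. r * (F i - F0)) + b * (\<Sum>i\<in>I. r * (H i - H0))"
proof -
  have "r * ((a * F i + b * H i) - (a * F0 + b * H0)) = a * (r * (F i - F0)) + b * (r * (H i - H0))" for i
    by (simp add: algebra_simps)
  then show ?thesis by (simp add: sum.distrib sum_distrib_left)
qed

definition rewire_rate :: "nat \<Rightarrow> nat \<Rightarrow> real \<Rightarrow> real" where
  "rewire_rate n d \<nu> = (\<nu> / 4) / (real (d * n) - 1)"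

lemma rewire_gen_eq:
  "rewire_gen n d \<nu> f (G, z)
     = (\<Sum>p\<in>rewire_pairs n d G. rewire_rate n d \<nu> * (f (rewire G (fst p) (snd p), z) - f (G, z)))"
  unfolding rewire_gen_def rewire_rate_def rewire_pairs_def
  by (simp add: sum.Sigma finite_stubs split_def)

lemma rewire_gen_linear: "linear_op (rewire_gen n d \<nu>)"
proof (rule linear_opI)
  fix a b :: real and f g :: "graph \<times> 'a \<Rightarrow> real" and s :: "graph \<times> 'a"
  obtain G z where s: "s = (G, z)" by fastforce
  show "rewire_gen n d \<nu> (\<lambda>s. a * f s + b * g s) s = a * rewire_gen n d \<nu> f s + b * rewire_gen n d \<nu> g s"
    unfolding s by (simp only: rewire_gen_eq sum_jumps_linear)
qed

lemma voter_gen_linear: "linear_op (voter_gen n d \<nu>)"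
proof (rule linear_opI)
  fix a b :: real and f g :: "graph \<times> (nat \<Rightarrow> bool) \<Rightarrow> real" and s :: "graph \<times> (nat \<Rightarrow> bool)"
  obtain G \<eta> where s: "s = (G, \<eta>)" by fastforce
  show "voter_gen n d \<nu> (\<lambda>s. a * f s + b * g s) s = a * voter_gen n d \<nu> f s + b * voter_gen n d \<nu> g s"
    unfolding s voter_gen_def
    by (simp only: case_prod_conv linear_op_def[THEN iffD1, OF rewire_gen_linear] sum_jumps_linear
        sum.distrib sum_distrib_left[symmetric]) (simp add: algebra_simps)
qed

lemma walk_stop_gen_linear: "linear_op (walk_stop_gen n d \<nu>)"
proof (rule linear_opI)
  fix a b :: real and f g :: "graph \<times> (nat \<times> nat) \<Rightarrow> real" and s :: "graph \<times> (nat \<times> nat)"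
  obtain G X Y where s: "s = (G, X, Y)" by (metis prod.exhaust)
  show "walk_stop_gen n d \<nu> (\<lambda>s. a * f s + b * g s) s
      = a * walk_stop_gen n d \<nu> f s + b * walk_stop_gen n d \<nu> g s"
    unfolding s walk_stop_gen_def
    by (simp only: case_prod_conv linear_op_def[THEN iffD1, OF rewire_gen_linear] sum_jumps_linear)
      (simp add: algebra_simps)
qed

lemma voter_gen_local: "local_op (voter_gen n d \<nu>) (graphs n d \<times> UNIV)"
  unfolding local_op_def
proof (intro allI impI ballI)
  fix f g :: "graph \<times> (nat \<Rightarrow> bool) \<Rightarrow> real" and p
  assume fg: "\<forall>s\<in>graphs n d \<times> UNIV. f s = g s" and p: "p \<in> graphs n d \<times> (UNIV :: (nat \<Rightarrow> bool) set)"
  obtain G \<eta> where p_def: "p = (G, \<eta>)" by fastforce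
  have G: "G \<in> graphs n d" using p p_def by simp
  have "rewire_gen n d \<nu> f (G, \<eta>) = rewire_gen n d \<nu> g (G, \<eta>)"
    unfolding rewire_gen_eq using fg by (intro sum.cong refl) (simp add: rewire_pair_in_graphs[OF G] G)
  then show "voter_gen n d \<nu> f p = voter_gen n d \<nu> g p"
    unfolding p_def voter_gen_def using fg G by simp
qed

lemma walk_stop_gen_local: "local_op (walk_stop_gen n d \<nu>) (graphs n d \<times> ({..<n} \<times> {..<n}))"
  unfolding local_op_def
proof (intro allI impI ballI)
  fix f g :: "graph \<times> (nat \<times> nat) \<Rightarrow> real" and p
  assume fg: "\<forall>s\<in>graphs n d \<times> ({..<n} \<times> {..<n}). f s = g s"
    and p: "p \<in> graphs n d \<times> ({..<n} \<times> {..<n})"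
  obtain G X Y where p_def: "p = (G, X, Y)" by (metis prod.exhaust)
  have G: "G \<in> graphs n d" and XY: "X < n" "Y < n" using p p_def by auto
  have "rewire_gen n d \<nu> f (G, X, Y) = rewire_gen n d \<nu> g (G, X, Y)"
    unfolding rewire_gen_eq using fg XY by (intro sum.cong refl) (simp add: rewire_pair_in_graphs[OF G] G)
  then show "walk_stop_gen n d \<nu> f p = walk_stop_gen n d \<nu> g p"
    unfolding p_def walk_stop_gen_def using fg G XY nbr_less[OF G] by simp
qed

section \<open>Duality\<close>

definition disagree :: "(nat \<Rightarrow> bool) \<Rightarrow> nat \<Rightarrow> nat \<Rightarrow> real" where
  "disagree \<eta> x y = (if \<eta> x = \<eta> y then 0 else 1)"

fun duality_fun :: "graph \<times> (nat \<Rightarrow> bool) \<Rightarrow> graph \<times> nat \<times> nat \<Rightarrow> real" where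
  "duality_fun (G, \<eta>) (G', x, y) = (if G = G' then disagree \<eta> x y else 0)"

lemma sum_lessThan_two_points:
  fixes F :: "nat \<Rightarrow> real"
  assumes "x \<noteq> y" "x < n" "y < n" "\<And>z. z \<noteq> x \<Longrightarrow> z \<noteq> y \<Longrightarrow> F z = 0"
  shows "(\<Sum>z<n. F z) = F x + F y"
proof -
  have "(\<Sum>z<n. F z) = (\<Sum>z\<in>{x, y}. F z)"
    by (rule sum.mono_neutral_right) (use assms in auto)
  then show ?thesis using assms(1) by simp
qed

lemma rewire_gen_duality:
  assumes G: "G \<in> graphs n d" and G': "G' \<in> graphs n d"
  shows "rewire_gen n d \<nu> (\<lambda>z. duality_fun z (G', x, y)) (G, \<eta>)
       = rewire_gen n d \<nu> (duality_fun (G, \<eta>)) (G', x, y)"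
proof (cases "G = G'")
  case True
  show ?thesis unfolding rewire_gen_eq True by (intro sum.cong refl) auto
next
  case False
  let ?c = "rewire_rate n d \<nu> * disagree \<eta> x y"
  have "rewire_gen n d \<nu> (\<lambda>z. duality_fun z (G', x, y)) (G, \<eta>)
      = (\<Sum>p\<in>rewire_pairs n d G. if rewire G (fst p) (snd p) = G' then ?c else 0)"
    unfolding rewire_gen_eq using False by (intro sum.cong refl) simp
  also have "\<dots> = (\<Sum>p\<in>rewire_pairs n d G'. if rewire G' (fst p) (snd p) = G then ?c else 0)"
    unfolding sum_rewire_indicator card_rewire_moves_sym[OF G G'] ..
  also have "\<dots> = rewire_gen n d \<nu> (duality_fun (G, \<eta>)) (G', x, y)"
    unfolding rewire_gen_eq using False by (intro sum.cong refl) auto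
  finally show ?thesis .
qed

text \<open>The update \<open>\<eta>(x := \<eta> (nbr G x i))\<close> changes the disagreement of \<open>x\<close> and \<open>y\<close> exactly as the
  jump of the walk from \<open>x\<close> to \<open>nbr G x i\<close> does.\<close>

lemma voter_gen_duality:
  assumes G: "G \<in> graphs n d" and G': "G' \<in> graphs n d" and x: "x < n" and y: "y < n"
  shows "voter_gen n d \<nu> (\<lambda>z. duality_fun z (G', x, y)) (G, \<eta>)
       = walk_stop_gen n d \<nu> (duality_fun (G, \<eta>)) (G', x, y)"
proof -
  have "(\<Sum>z<n. \<Sum>i<d. 1 / real d * (duality_fun (G, \<eta>(z := \<eta> (nbr G z i))) (G', x, y)
                                      - duality_fun (G, \<eta>) (G', x, y)))
     = (if x = y then 0 else
           (\<Sum>i<d. 1 / real d * (duality_fun (G, \<eta>) (G', nbr G' x i, y) - duality_fun (G, \<eta>) (G', x, y)))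
         + (\<Sum>i<d. 1 / real d * (duality_fun (G, \<eta>) (G', x, nbr G' y i) - duality_fun (G, \<eta>) (G', x, y))))"
  proof (cases "G = G' \<and> x \<noteq> y")
    case True
    then show ?thesis
      by (subst sum_lessThan_two_points[OF _ x y]) (auto simp: disagree_def)
  qed (auto simp: disagree_def)
  then show ?thesis
    unfolding voter_gen_def walk_stop_gen_def using rewire_gen_duality[OF G G'] by simp
qed

lemma voter_gen_commute:
  assumes "linear_op M"
  shows "voter_gen n d \<nu> (\<lambda>z. M (H z) w) (G, \<eta>) = M (\<lambda>w. voter_gen n d \<nu> (\<lambda>z. H z w) (G, \<eta>)) w"
  unfolding voter_gen_def rewire_gen_def
  by (simp add: linear_op_add[OF assms] linear_op_sum[OF assms] linear_op_cmult[OF assms]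
      linear_op_diff[OF assms] linear_op_divide[OF assms])

lemma voter_gen_funpow_duality:
  assumes G: "G \<in> graphs n d" and G': "G' \<in> graphs n d" and x: "x < n" and y: "y < n"
  shows "(voter_gen n d \<nu> ^^ k) (\<lambda>z. duality_fun z (G', x, y)) (G, \<eta>)
       = (walk_stop_gen n d \<nu> ^^ k) (duality_fun (G, \<eta>)) (G', x, y)"
  using G
proof (induction k arbitrary: G \<eta>)
  case (Suc k)
  let ?V = "voter_gen n d \<nu>" and ?W = "walk_stop_gen n d \<nu>"
  have "(?V ^^ Suc k) (\<lambda>z. duality_fun z (G', x, y)) (G, \<eta>)
      = ?V (\<lambda>z. (?W ^^ k) (duality_fun z) (G', x, y)) (G, \<eta>)"
    using Suc voter_gen_local[of n d \<nu>] unfolding local_op_def by auto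
  also have "\<dots> = (?W ^^ k) (\<lambda>w. ?V (\<lambda>z. duality_fun z w) (G, \<eta>)) (G', x, y)"
    by (rule voter_gen_commute[OF linear_op_funpow[OF walk_stop_gen_linear]])
  also have "\<dots> = (?W ^^ k) (?W (duality_fun (G, \<eta>))) (G', x, y)"
    using G' x y voter_gen_duality[OF Suc.prems]
    by (intro local_op_funpow[OF walk_stop_gen_local]) auto
  also have "\<dots> = (?W ^^ Suc k) (duality_fun (G, \<eta>)) (G', x, y)"
    by (simp only: funpow_Suc_right comp_apply)
  finally show ?case .
qed simp

definition disagree_at :: "(nat \<Rightarrow> bool) \<Rightarrow> graph \<times> nat \<times> nat \<Rightarrow> real" where
  "disagree_at \<xi> = (\<lambda>(G, x, y). disagree \<xi> x y)"

lemma disagree_at_simp [simp]: "disagree_at \<xi> (G, x, y) = disagree \<xi> x y"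
  by (simp add: disagree_at_def)

lemma sum_graphs_duality_fun:
  assumes "G \<in> graphs n d"
  shows "(\<Sum>G'\<in>graphs n d. \<alpha> G' * duality_fun (G, \<eta>) (G', x, y)) = \<alpha> G * disagree \<eta> x y"
proof -
  have "(\<Sum>G'\<in>graphs n d. \<alpha> G' * duality_fun (G, \<eta>) (G', x, y))
      = (\<Sum>G'\<in>graphs n d. if G = G' then \<alpha> G * disagree \<eta> x y else 0)"
    by (intro sum.cong) auto
  then show ?thesis using assms finite_graphs by simp
qed

lemma funpow_voter_gen_weighted_disagree:
  assumes G: "G \<in> graphs n d" and x: "x < n" and y: "y < n"
  shows "(voter_gen n d \<nu> ^^ k) (\<lambda>z. \<alpha> (fst z) * disagree (snd z) x y) (G, \<xi>)
       = (\<Sum>G'\<in>graphs n d. \<alpha> G' * (walk_stop_gen n d \<nu> ^^ k) (duality_fun (G, \<xi>)) (G', x, y))"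
proof -
  let ?V = "voter_gen n d \<nu>" and ?S = "graphs n d"
  have V_linear: "linear_op (?V ^^ k)" by (simp add: linear_op_funpow voter_gen_linear)
  have "\<alpha> (fst z) * disagree (snd z) x y = (\<Sum>G'\<in>?S. \<alpha> G' * duality_fun z (G', x, y))"
    if "z \<in> ?S \<times> UNIV" for z
    using that by (cases z) (simp add: sum_graphs_duality_fun del: duality_fun.simps)
  then have "(?V ^^ k) (\<lambda>z. \<alpha> (fst z) * disagree (snd z) x y) (G, \<xi>)
      = (?V ^^ k) (\<lambda>z. \<Sum>G'\<in>?S. \<alpha> G' * duality_fun z (G', x, y)) (G, \<xi>)"
    using G by (intro local_op_funpow[OF voter_gen_local]) auto
  also have "\<dots> = (\<Sum>G'\<in>?S. \<alpha> G' * (?V ^^ k) (\<lambda>z. duality_fun z (G', x, y)) (G, \<xi>))"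
    by (simp add: linear_op_sum[OF V_linear] linear_op_cmult[OF V_linear])
  also have "\<dots> = (\<Sum>G'\<in>?S. \<alpha> G' * (walk_stop_gen n d \<nu> ^^ k) (duality_fun (G, \<xi>)) (G', x, y))"
    by (intro sum.cong refl) (simp add: voter_gen_funpow_duality[OF G _ x y])
  finally show ?thesis .
qed

lemma sum_graphs_funpow_walk_duality_fun:
  assumes G': "G' \<in> graphs n d" and x: "x < n" and y: "y < n"
  shows "(\<Sum>G\<in>graphs n d. (walk_stop_gen n d \<nu> ^^ k) (duality_fun (G, \<xi>)) (G', x, y))
       = (walk_stop_gen n d \<nu> ^^ k) (disagree_at \<xi>) (G', x, y)"
proof -
  let ?W = "walk_stop_gen n d \<nu>" and ?S = "graphs n d"
  have "(\<Sum>G\<in>?S. duality_fun (G, \<xi>) w) = disagree_at \<xi> w" if "w \<in> ?S \<times> ({..<n} \<times> {..<n})" for w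
    using that finite_graphs by (cases w) (simp add: sum.delta)
  then have "(?W ^^ k) (\<lambda>w. \<Sum>G\<in>?S. duality_fun (G, \<xi>) w) (G', x, y) = (?W ^^ k) (disagree_at \<xi>) (G', x, y)"
    using G' x y by (intro local_op_funpow[OF walk_stop_gen_local]) auto
  then show ?thesis
    by (simp add: linear_op_sum[OF linear_op_funpow[OF walk_stop_gen_linear]])
qed

lemma sum_graphs_funpow_duality:
  assumes x: "x < n" and y: "y < n"
  shows "(\<Sum>G\<in>graphs n d. (voter_gen n d \<nu> ^^ k) (\<lambda>z. \<alpha> (fst z) * disagree (snd z) x y) (G, \<xi>))
       = (\<Sum>G'\<in>graphs n d. \<alpha> G' * (walk_stop_gen n d \<nu> ^^ k) (disagree_at \<xi>) (G', x, y))"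
proof -
  let ?W = "walk_stop_gen n d \<nu>" and ?S = "graphs n d"
  have "(\<Sum>G\<in>?S. (voter_gen n d \<nu> ^^ k) (\<lambda>z. \<alpha> (fst z) * disagree (snd z) x y) (G, \<xi>))
      = (\<Sum>G\<in>?S. \<Sum>G'\<in>?S. \<alpha> G' * (?W ^^ k) (duality_fun (G, \<xi>)) (G', x, y))"
    by (intro sum.cong refl funpow_voter_gen_weighted_disagree x y)
  also have "\<dots> = (\<Sum>G'\<in>?S. \<Sum>G\<in>?S. \<alpha> G' * (?W ^^ k) (duality_fun (G, \<xi>)) (G', x, y))"
    by (rule sum.swap)
  also have "\<dots> = (\<Sum>G'\<in>?S. \<alpha> G' * (?W ^^ k) (disagree_at \<xi>) (G', x, y))"
    by (intro sum.cong refl) (simp add: sum_distrib_left[symmetric] sum_graphs_funpow_walk_duality_fun x y)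
  finally show ?thesis .
qed

section \<open>Averages over graphs and Bernoulli initial configurations\<close>

lemma avg_mu_sum: "avg_mu n d (\<lambda>G. \<Sum>i\<in>I. f i G) = (\<Sum>i\<in>I. avg_mu n d (f i))"
  unfolding avg_mu_def by (subst sum.swap) (simp add: sum_divide_distrib)

lemma avg_mu_cmult: "avg_mu n d (\<lambda>G. c * f G) = c * avg_mu n d f"
  unfolding avg_mu_def by (simp add: sum_distrib_left)

lemma avg_mu_mono: "(\<And>G. G \<in> graphs n d \<Longrightarrow> f G \<le> g G) \<Longrightarrow> avg_mu n d f \<le> avg_mu n d g"
  unfolding avg_mu_def by (intro divide_right_mono sum_mono) simp_all

lemma avg_mu_nonneg: "(\<And>G. G \<in> graphs n d \<Longrightarrow> 0 \<le> f G) \<Longrightarrow> 0 \<le> avg_mu n d f"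
  unfolding avg_mu_def by (intro divide_nonneg_nonneg sum_nonneg) simp_all

lemma avg_mu_cong: "(\<And>G. G \<in> graphs n d \<Longrightarrow> f G = g G) \<Longrightarrow> avg_mu n d f = avg_mu n d g"
  unfolding avg_mu_def by simp

definition bernoulli_weight :: "nat \<Rightarrow> real \<Rightarrow> (nat \<Rightarrow> bool) \<Rightarrow> real" where
  "bernoulli_weight n u \<xi> = u ^ card {x\<in>{..<n}. \<xi> x} * (1 - u) ^ card {x\<in>{..<n}. \<not> \<xi> x}"

lemma bij_betw_Pow_configs: "bij_betw (\<lambda>B x. x \<in> B) (Pow {..<n}) (configs n)"
  by (rule bij_betw_byWitness[where f' = "\<lambda>\<xi>. {x. \<xi> x}"]) (auto simp: configs_def)

lemma finite_configs: "finite (configs n)"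
  using bij_betw_finite[OF bij_betw_Pow_configs] by simp

text \<open>Expand \<open>\<Prod>i\<in>I. (f i + g i)\<close> with \<open>f i = u\<close>, \<open>g i = 1 - u\<close>, except \<open>f Y = 0\<close> and \<open>g X = 0\<close>.\<close>

lemma sum_Pow_weight_mem_not_mem:
  fixes u :: real
  assumes I: "finite I" and X: "X \<in> I" and Y: "Y \<in> I" and XY: "X \<noteq> Y"
  shows "(\<Sum>B\<in>Pow I. (if X \<in> B \<and> Y \<notin> B then 1 else 0) * (u ^ card B * (1 - u) ^ card (I - B))) = u * (1 - u)"
proof -
  define f where "f i = (if i = Y then 0 else u)" for i
  define g where "g i = (if i = X then 0 else 1 - u)" for i
  have summand: "(\<Prod>i\<in>B. f i) * (\<Prod>i\<in>I - B. g i)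
      = (if X \<in> B \<and> Y \<notin> B then 1 else 0) * (u ^ card B * (1 - u) ^ card (I - B))" if B: "B \<in> Pow I" for B
  proof -
    have "finite B" using B I by (auto intro: finite_subset)
    then have "(\<Prod>i\<in>B. f i) = (if Y \<in> B then 0 else u ^ card B)"
      by (simp add: f_def prod.If_cases Int_absorb1 Diff_eq[symmetric] prod_zero)
    moreover have "(\<Prod>i\<in>I - B. g i) = (if X \<in> B then (1 - u) ^ card (I - B) else 0)"
      using I X by (simp add: g_def prod.If_cases Int_absorb1 Diff_eq[symmetric] prod_zero)
    ultimately show ?thesis by simp
  qed
  have "(\<Sum>B\<in>Pow I. (if X \<in> B \<and> Y \<notin> B then 1 else 0) * (u ^ card B * (1 - u) ^ card (I - B)))
      = (\<Prod>i\<in>I. f i + g i)"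
    by (simp add: prod_add[OF I] summand)
  also have "\<dots> = (f X + g X) * ((f Y + g Y) * (\<Prod>i\<in>I - {X} - {Y}. f i + g i))"
    using I X Y XY by (simp add: prod.remove[of I X] prod.remove[of "I - {X}" Y])
  also have "(\<Prod>i\<in>I - {X} - {Y}. f i + g i) = 1"
    by (rule prod.neutral) (auto simp: f_def g_def)
  finally show ?thesis using XY by (simp add: f_def g_def)
qed

lemma sum_bernoulli_weight_disagree:
  fixes u :: real
  assumes X: "X < n" and Y: "Y < n"
  shows "(\<Sum>\<xi>\<in>configs n. bernoulli_weight n u \<xi> * disagree \<xi> X Y) = (if X = Y then 0 else 2 * u * (1 - u))"
proof (cases "X = Y")
  case False
  let ?w = "\<lambda>B. u ^ card B * (1 - u) ^ card ({..<n} - B)"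
  have "(\<Sum>\<xi>\<in>configs n. bernoulli_weight n u \<xi> * disagree \<xi> X Y)
      = (\<Sum>B\<in>Pow {..<n}. bernoulli_weight n u (\<lambda>x. x \<in> B) * disagree (\<lambda>x. x \<in> B) X Y)"
    by (rule sum.reindex_bij_betw[OF bij_betw_Pow_configs, symmetric])
  also have "\<dots> = (\<Sum>B\<in>Pow {..<n}. (if X \<in> B \<and> Y \<notin> B then 1 else 0) * ?w B)
                + (\<Sum>B\<in>Pow {..<n}. (if Y \<in> B \<and> X \<notin> B then 1 else 0) * ?w B)"
  proof (subst sum.distrib[symmetric], intro sum.cong refl)
    fix B assume "B \<in> Pow {..<n}"
    then have "{x\<in>{..<n}. x \<in> B} = B" "{x\<in>{..<n}. x \<notin> B} = {..<n} - B" by auto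
    then show "bernoulli_weight n u (\<lambda>x. x \<in> B) * disagree (\<lambda>x. x \<in> B) X Y
        = (if X \<in> B \<and> Y \<notin> B then 1 else 0) * ?w B + (if Y \<in> B \<and> X \<notin> B then 1 else 0) * ?w B"
      unfolding bernoulli_weight_def disagree_def by auto
  qed
  also have "\<dots> = 2 * u * (1 - u)"
    using sum_Pow_weight_mem_not_mem[of "{..<n}" X Y u] sum_Pow_weight_mem_not_mem[of "{..<n}" Y X u] X Y False
    by simp
  finally show ?thesis using False by simp
qed (simp add: disagree_def)

lemma bounded_range_disagree_at: "bounded (range (disagree_at \<xi>))"
  unfolding bounded_iff by (intro exI[of _ 1]) (auto simp: disagree_at_def disagree_def)

lemma bounded_range_mult_disagree:
  assumes "bounded (range \<alpha>)"
  shows "bounded (range (\<lambda>z. \<alpha> (fst z) * disagree (snd z) x y))"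
proof -
  obtain B where B: "\<forall>G. \<bar>\<alpha> G\<bar> \<le> B" using assms by (auto simp: bounded_iff)
  then have "0 \<le> B" by (meson abs_ge_zero order_trans)
  with B have "\<bar>\<alpha> (fst z) * disagree (snd z) x y\<bar> \<le> B" for z
    by (simp add: disagree_def)
  then show ?thesis unfolding bounded_iff by (auto intro!: exI[of _ B])
qed

definition walks_apart :: "graph \<times> nat \<times> nat \<Rightarrow> real" where
  "walks_apart = (\<lambda>(G, X, Y). if X \<noteq> Y then 1 else 0)"

lemma walks_apart_simp [simp]: "walks_apart (G, X, Y) = (if X \<noteq> Y then 1 else 0)"
  by (simp add: walks_apart_def)

lemma meet_tail_eq: "meet_tail n d \<nu> t G x y = semigroup (walk_stop_gen n d \<nu>) t walks_apart (G, x, y)"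
  unfolding meet_tail_def walks_apart_def ..

lemma bounded_range_walks_apart: "bounded (range walks_apart)"
  unfolding bounded_iff by (intro exI[of _ 1]) (auto simp: walks_apart_def)

lemma sum_weighted_avg_mu_swap:
  "(\<Sum>\<xi>\<in>X. w \<xi> * (\<Sum>q\<in>Q. c q * avg_mu n d (\<lambda>G. \<alpha> q G * P \<xi> q G)))
     = (\<Sum>q\<in>Q. c q * avg_mu n d (\<lambda>G. \<alpha> q G * (\<Sum>\<xi>\<in>X. w \<xi> * P \<xi> q G)))"
proof -
  let ?N = "real (card (graphs n d))"
  have "(\<Sum>\<xi>\<in>X. w \<xi> * (\<Sum>q\<in>Q. c q * avg_mu n d (\<lambda>G. \<alpha> q G * P \<xi> q G)))
      = (\<Sum>\<xi>\<in>X. \<Sum>q\<in>Q. \<Sum>G\<in>graphs n d. w \<xi> * c q * \<alpha> q G * P \<xi> q G / ?N)"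
    by (simp add: avg_mu_def sum_distrib_left sum_divide_distrib mult.assoc)
  also have "\<dots> = (\<Sum>q\<in>Q. \<Sum>\<xi>\<in>X. \<Sum>G\<in>graphs n d. w \<xi> * c q * \<alpha> q G * P \<xi> q G / ?N)"
    by (rule sum.swap)
  also have "\<dots> = (\<Sum>q\<in>Q. \<Sum>G\<in>graphs n d. \<Sum>\<xi>\<in>X. w \<xi> * c q * \<alpha> q G * P \<xi> q G / ?N)"
    by (intro sum.cong refl sum.swap)
  also have "\<dots> = (\<Sum>q\<in>Q. c q * avg_mu n d (\<lambda>G. \<alpha> q G * (\<Sum>\<xi>\<in>X. w \<xi> * P \<xi> q G)))"
    by (simp add: avg_mu_def sum_distrib_left sum_divide_distrib mult_ac)
  finally show ?thesis .
qed

definition rewire_rate_bound :: "nat \<Rightarrow> nat \<Rightarrow> real \<Rightarrow> real" where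
  "rewire_rate_bound n d \<nu> = real ((d * n) ^ 2) * rewire_rate n d \<nu>"

locale rewiring_voter =
  fixes n d :: nat and \<nu> :: real
  assumes nu_nonneg: "0 \<le> \<nu>" and d_pos: "0 < d" and two_le_stubs: "2 \<le> d * n"
begin

lemma rewire_rate_nonneg: "0 \<le> rewire_rate n d \<nu>"
proof -
  have "2 \<le> real (d * n)" using two_le_stubs by linarith
  then show ?thesis unfolding rewire_rate_def using nu_nonneg by simp
qed

lemma rewire_rate_bound_nonneg: "0 \<le> rewire_rate_bound n d \<nu>"
  unfolding rewire_rate_bound_def using rewire_rate_nonneg by simp

lemma abs_rewire_gen_le:
  assumes "\<forall>s. \<bar>f s\<bar> \<le> B"
  shows "\<bar>rewire_gen n d \<nu> f (G, z)\<bar> \<le> rewire_rate_bound n d \<nu> * (2 * B)"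
proof -
  have "0 \<le> B" using assms by (meson abs_ge_zero order_trans)
  have "\<bar>rewire_gen n d \<nu> f (G, z)\<bar>
      \<le> real (card (rewire_pairs n d G)) * rewire_rate n d \<nu> * (2 * B)"
    unfolding rewire_gen_eq
    by (rule abs_sum_jumps_le[OF rewire_rate_nonneg assms, where h = "\<lambda>p. (rewire G (fst p) (snd p), z)"])
  also have "\<dots> \<le> rewire_rate_bound n d \<nu> * (2 * B)"
    unfolding rewire_rate_bound_def using card_rewire_pairs_le rewire_rate_nonneg \<open>0 \<le> B\<close>
    by (intro mult_right_mono) (simp_all only: of_nat_le_iff mult_nonneg_nonneg zero_le_numeral)
  finally show ?thesis .
qed

lemma rewire_gen_shift_nonneg:
  assumes "\<forall>s. 0 \<le> f s"
  shows "0 \<le> rewire_gen n d \<nu> f (G, z) + rewire_rate_bound n d \<nu> * f (G, z)"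
proof -
  have "0 \<le> rewire_gen n d \<nu> f (G, z) + real (card (rewire_pairs n d G)) * rewire_rate n d \<nu> * f (G, z)"
    unfolding rewire_gen_eq
    by (rule sum_jumps_shift_nonneg[OF rewire_rate_nonneg assms, where h = "\<lambda>p. (rewire G (fst p) (snd p), z)"])
  also have "\<dots> \<le> rewire_gen n d \<nu> f (G, z) + rewire_rate_bound n d \<nu> * f (G, z)"
    unfolding rewire_rate_bound_def using card_rewire_pairs_le rewire_rate_nonneg assms
    by (intro add_left_mono mult_right_mono) (simp_all only: of_nat_le_iff)
  finally show ?thesis .
qed

lemma abs_sum_neighbour_jumps_le:
  assumes "\<forall>s. \<bar>f s\<bar> \<le> B"
  shows "\<bar>\<Sum>i<d. 1 / real d * (f (h i) - f q)\<bar> \<le> 2 * B"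
  using abs_sum_jumps_le[where r = "1 / real d" and I = "{..<d}"] assms d_pos by simp

lemma sum_neighbour_jumps_shift_nonneg:
  assumes "\<forall>s. 0 \<le> f s"
  shows "0 \<le> (\<Sum>i<d. 1 / real d * (f (h i) - f q)) + f q"
  using sum_jumps_shift_nonneg[where r = "1 / real d" and I = "{..<d}"] assms d_pos by simp

definition generator_bound :: real where
  "generator_bound = 2 * rewire_rate_bound n d \<nu> + 2 * real n + 4"

lemma voter_gen_bounded: "bounded_op (voter_gen n d \<nu>) generator_bound"
  unfolding bounded_op_def
proof (intro allI impI)
  fix f :: "graph \<times> (nat \<Rightarrow> bool) \<Rightarrow> real" and B :: real and p :: "graph \<times> (nat \<Rightarrow> bool)"
  assume f: "\<forall>s. \<bar>f s\<bar> \<le> B"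
  obtain G \<eta> where p: "p = (G, \<eta>)" by fastforce
  have "0 \<le> B" using f by (meson abs_ge_zero order_trans)
  have "\<bar>\<Sum>x<n. \<Sum>i<d. 1 / real d * (f (G, \<eta>(x := \<eta> (nbr G x i))) - f (G, \<eta>))\<bar>
      \<le> real (card {..<n}) * (2 * B)"
    by (intro order_trans[OF sum_abs] sum_bounded_above abs_sum_neighbour_jumps_le[OF f])
  then show "\<bar>voter_gen n d \<nu> f p\<bar> \<le> generator_bound * B"
    unfolding p voter_gen_def generator_bound_def using abs_rewire_gen_le[OF f, of G \<eta>] \<open>0 \<le> B\<close>
    by (simp add: algebra_simps)
qed

lemma walk_stop_gen_bounded: "bounded_op (walk_stop_gen n d \<nu>) generator_bound"
  unfolding bounded_op_def
proof (intro allI impI)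
  fix f :: "graph \<times> (nat \<times> nat) \<Rightarrow> real" and B :: real and p :: "graph \<times> (nat \<times> nat)"
  assume f: "\<forall>s. \<bar>f s\<bar> \<le> B"
  obtain G X Y where p: "p = (G, X, Y)" by (metis prod.exhaust)
  have "0 \<le> B" using f by (meson abs_ge_zero order_trans)
  show "\<bar>walk_stop_gen n d \<nu> f p\<bar> \<le> generator_bound * B"
    unfolding p walk_stop_gen_def generator_bound_def
    using abs_rewire_gen_le[OF f, of G "(X, Y)"] \<open>0 \<le> B\<close>
      abs_sum_neighbour_jumps_le[OF f, of "\<lambda>i. (G, nbr G X i, Y)" "(G, X, Y)"]
      abs_sum_neighbour_jumps_le[OF f, of "\<lambda>i. (G, X, nbr G Y i)" "(G, X, Y)"]
    by (simp add: algebra_simps) (smt (verit) mult_nonneg_nonneg of_nat_0_le_iff)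
qed

lemma generator_bound_nonneg: "0 \<le> generator_bound"
  unfolding generator_bound_def using rewire_rate_bound_nonneg by simp

sublocale voter: bounded_generator "voter_gen n d \<nu>" generator_bound
  by unfold_locales (rule voter_gen_linear voter_gen_bounded generator_bound_nonneg)+

sublocale walk: bounded_generator "walk_stop_gen n d \<nu>" generator_bound
  by unfold_locales (rule walk_stop_gen_linear walk_stop_gen_bounded generator_bound_nonneg)+

lemma walk_stop_gen_shift_nonneg:
  assumes "\<forall>s. 0 \<le> g s"
  shows "0 \<le> walk_stop_gen n d \<nu> g p + (rewire_rate_bound n d \<nu> + 2) * g p"
proof -
  obtain G X Y where p: "p = (G, X, Y)" by (metis prod.exhaust)
  have "0 \<le> g (G, X, Y)" using assms by blast
  then show ?thesis
    unfolding p walk_stop_gen_def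
    using rewire_gen_shift_nonneg[OF assms, of G "(X, Y)"]
      sum_neighbour_jumps_shift_nonneg[OF assms, of "\<lambda>i. (G, nbr G X i, Y)" "(G, X, Y)"]
      sum_neighbour_jumps_shift_nonneg[OF assms, of "\<lambda>i. (G, X, nbr G Y i)" "(G, X, Y)"]
    by (cases "X = Y") (simp_all add: algebra_simps)
qed

lemma sum_graphs_semigroup_duality:
  assumes x: "x < n" and y: "y < n" and \<alpha>: "bounded (range \<alpha>)"
  shows "(\<Sum>G\<in>graphs n d. semigroup (voter_gen n d \<nu>) t (\<lambda>z. \<alpha> (fst z) * disagree (snd z) x y) (G, \<xi>))
       = (\<Sum>G'\<in>graphs n d. \<alpha> G' * semigroup (walk_stop_gen n d \<nu>) t (disagree_at \<xi>) (G', x, y))"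
proof -
  let ?V = "voter_gen n d \<nu>" and ?W = "walk_stop_gen n d \<nu>" and ?S = "graphs n d"
  let ?F = "\<lambda>z. \<alpha> (fst z) * disagree (snd z) x y"
  note V_summable = voter.summable_semigroup_series[OF bounded_range_mult_disagree[OF \<alpha>]]
  note W_summable = walk.summable_semigroup_series[OF bounded_range_disagree_at]
  have "(\<Sum>G\<in>?S. semigroup ?V t ?F (G, \<xi>)) = (\<Sum>k. \<Sum>G\<in>?S. t ^ k / fact k * (?V ^^ k) ?F (G, \<xi>))"
    unfolding semigroup_def by (rule suminf_sum[symmetric]) (rule V_summable)
  also have "\<dots> = (\<Sum>k. \<Sum>G'\<in>?S. \<alpha> G' * (t ^ k / fact k * (?W ^^ k) (disagree_at \<xi>) (G', x, y)))"
  proof (rule arg_cong[where f = suminf], rule ext)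
    fix k
    have "(\<Sum>G\<in>?S. t ^ k / fact k * (?V ^^ k) ?F (G, \<xi>)) = t ^ k / fact k * (\<Sum>G\<in>?S. (?V ^^ k) ?F (G, \<xi>))"
      by (rule sum_distrib_left[symmetric])
    also have "\<dots> = t ^ k / fact k * (\<Sum>G'\<in>?S. \<alpha> G' * (?W ^^ k) (disagree_at \<xi>) (G', x, y))"
      by (simp only: sum_graphs_funpow_duality[OF x y])
    also have "\<dots> = (\<Sum>G'\<in>?S. \<alpha> G' * (t ^ k / fact k * (?W ^^ k) (disagree_at \<xi>) (G', x, y)))"
      by (simp add: sum_distrib_left mult_ac)
    finally show "(\<Sum>G\<in>?S. t ^ k / fact k * (?V ^^ k) ?F (G, \<xi>))
        = (\<Sum>G'\<in>?S. \<alpha> G' * (t ^ k / fact k * (?W ^^ k) (disagree_at \<xi>) (G', x, y)))" .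
  qed
  also have "\<dots> = (\<Sum>G'\<in>?S. \<Sum>k. \<alpha> G' * (t ^ k / fact k * (?W ^^ k) (disagree_at \<xi>) (G', x, y)))"
    by (rule suminf_sum) (rule summable_mult, rule W_summable)
  also have "\<dots> = (\<Sum>G'\<in>?S. \<alpha> G' * semigroup ?W t (disagree_at \<xi>) (G', x, y))"
    unfolding semigroup_def by (intro sum.cong refl suminf_mult W_summable)
  finally show ?thesis .
qed

lemma voter_exp_xi_pair_sum:
  assumes Q: "finite Q" and xy: "\<And>q. q \<in> Q \<Longrightarrow> xq q < n \<and> yq q < n"
    and \<alpha>: "\<And>q. bounded (range (\<alpha> q))"
    and F: "\<And>G \<eta>. G \<in> graphs n d \<Longrightarrow> F (G, \<eta>) = (\<Sum>q\<in>Q. c q * (\<alpha> q G * disagree \<eta> (xq q) (yq q)))"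
  shows "voter_exp_xi n d \<nu> t \<xi> F
       = (\<Sum>q\<in>Q. c q * avg_mu n d (\<lambda>G. \<alpha> q G * semigroup (walk_stop_gen n d \<nu>) t (disagree_at \<xi>) (G, xq q, yq q)))"
proof -
  let ?V = "voter_gen n d \<nu>" and ?W = "walk_stop_gen n d \<nu>" and ?S = "graphs n d"
  let ?F = "\<lambda>q z. \<alpha> q (fst z) * disagree (snd z) (xq q) (yq q)"
  have "semigroup ?V t F (G, \<xi>) = (\<Sum>q\<in>Q. c q * semigroup ?V t (?F q) (G, \<xi>))" if G: "G \<in> ?S" for G
  proof -
    have "semigroup ?V t F (G, \<xi>) = semigroup ?V t (\<lambda>z. \<Sum>q\<in>Q. c q * ?F q z) (G, \<xi>)"
      using G F by (intro semigroup_local[OF voter_gen_local]) auto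
    also have "\<dots> = (\<Sum>q\<in>Q. c q * semigroup ?V t (?F q) (G, \<xi>))"
      by (rule voter.semigroup_sum[OF Q bounded_range_mult_disagree[OF \<alpha>]])
    finally show ?thesis .
  qed
  then have "voter_exp_xi n d \<nu> t \<xi> F = avg_mu n d (\<lambda>G. \<Sum>q\<in>Q. c q * semigroup ?V t (?F q) (G, \<xi>))"
    unfolding voter_exp_xi_def by (rule avg_mu_cong)
  also have "\<dots> = (\<Sum>q\<in>Q. c q * avg_mu n d (\<lambda>G. semigroup ?V t (?F q) (G, \<xi>)))"
    by (simp only: avg_mu_sum avg_mu_cmult)
  also have "\<dots> = (\<Sum>q\<in>Q. c q * avg_mu n d (\<lambda>G. \<alpha> q G * semigroup ?W t (disagree_at \<xi>) (G, xq q, yq q)))"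
    unfolding avg_mu_def using xy
    by (intro sum.cong refl) (simp add: sum_graphs_semigroup_duality[OF _ _ \<alpha>])
  finally show ?thesis .
qed

lemma sum_bernoulli_semigroup_disagree_at:
  assumes G: "G \<in> graphs n d" and x: "x < n" and y: "y < n"
  shows "(\<Sum>\<xi>\<in>configs n. bernoulli_weight n u \<xi> * semigroup (walk_stop_gen n d \<nu>) t (disagree_at \<xi>) (G, x, y))
       = 2 * u * (1 - u) * meet_tail n d \<nu> t G x y"
proof -
  let ?W = "walk_stop_gen n d \<nu>"
  have "(\<Sum>\<xi>\<in>configs n. bernoulli_weight n u \<xi> * semigroup ?W t (disagree_at \<xi>) (G, x, y))
      = semigroup ?W t (\<lambda>w. \<Sum>\<xi>\<in>configs n. bernoulli_weight n u \<xi> * disagree_at \<xi> w) (G, x, y)"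
    by (rule walk.semigroup_sum[OF finite_configs bounded_range_disagree_at, symmetric])
  also have "\<dots> = semigroup ?W t (\<lambda>w. 2 * u * (1 - u) * walks_apart w) (G, x, y)"
    using G x y sum_bernoulli_weight_disagree[of _ n _ u]
    by (intro semigroup_local[OF walk_stop_gen_local]) auto
  also have "\<dots> = 2 * u * (1 - u) * meet_tail n d \<nu> t G x y"
    unfolding meet_tail_eq by (rule walk.semigroup_cmult[OF bounded_range_walks_apart])
  finally show ?thesis .
qed

lemma walk_semigroup_nonneg:
  "0 \<le> t \<Longrightarrow> \<forall>s. 0 \<le> f s \<Longrightarrow> bounded (range f) \<Longrightarrow> 0 \<le> semigroup (walk_stop_gen n d \<nu>) t f s"
  using walk.semigroup_nonneg[of "rewire_rate_bound n d \<nu> + 2"] rewire_rate_bound_nonneg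
    walk_stop_gen_shift_nonneg by simp

lemma meet_tail_nonneg: "0 \<le> t \<Longrightarrow> 0 \<le> meet_tail n d \<nu> t G x y"
  unfolding meet_tail_eq
  by (rule walk_semigroup_nonneg[OF _ _ bounded_range_walks_apart]) (auto simp: walks_apart_def)

lemma semigroup_disagree_at_le_meet_tail:
  assumes "0 \<le> t"
  shows "semigroup (walk_stop_gen n d \<nu>) t (disagree_at \<xi>) (G, x, y) \<le> meet_tail n d \<nu> t G x y"
proof -
  let ?W = "walk_stop_gen n d \<nu>"
  have gap: "0 \<le> walks_apart s - disagree_at \<xi> s \<and> walks_apart s - disagree_at \<xi> s \<le> 1" for s
    by (cases s) (simp add: disagree_def)
  then have "bounded (range (\<lambda>s. walks_apart s - disagree_at \<xi> s))"
    unfolding bounded_iff by (intro exI[of _ 1]) auto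
  then have "0 \<le> semigroup ?W t (\<lambda>s. walks_apart s - disagree_at \<xi> s) (G, x, y)"
    using assms gap by (intro walk_semigroup_nonneg) auto
  also have "\<dots> = meet_tail n d \<nu> t G x y - semigroup ?W t (disagree_at \<xi>) (G, x, y)"
    unfolding meet_tail_eq by (rule walk.semigroup_diff[OF bounded_range_walks_apart bounded_range_disagree_at])
  finally show ?thesis by simp
qed

lemma voter_exp_u_pair_sum:
  assumes Q: "finite Q" and xy: "\<And>q. q \<in> Q \<Longrightarrow> xq q < n \<and> yq q < n"
    and \<alpha>: "\<And>q. bounded (range (\<alpha> q))"
    and F: "\<And>G \<eta>. G \<in> graphs n d \<Longrightarrow> F (G, \<eta>) = (\<Sum>q\<in>Q. c q * (\<alpha> q G * disagree \<eta> (xq q) (yq q)))"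
  shows "voter_exp_u n d \<nu> t u F
       = 2 * u * (1 - u) * (\<Sum>q\<in>Q. c q * avg_mu n d (\<lambda>G. \<alpha> q G * meet_tail n d \<nu> t G (xq q) (yq q)))"
proof -
  let ?W = "walk_stop_gen n d \<nu>"
  have "voter_exp_u n d \<nu> t u F = (\<Sum>\<xi>\<in>configs n. bernoulli_weight n u \<xi> * voter_exp_xi n d \<nu> t \<xi> F)"
    unfolding voter_exp_u_def bernoulli_weight_def ..
  also have "\<dots> = (\<Sum>\<xi>\<in>configs n. bernoulli_weight n u \<xi>
      * (\<Sum>q\<in>Q. c q * avg_mu n d (\<lambda>G. \<alpha> q G * semigroup ?W t (disagree_at \<xi>) (G, xq q, yq q))))"
    by (simp only: voter_exp_xi_pair_sum[OF assms])
  also have "\<dots> = (\<Sum>q\<in>Q. c q * avg_mu n d (\<lambda>G. \<alpha> q G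
      * (\<Sum>\<xi>\<in>configs n. bernoulli_weight n u \<xi> * semigroup ?W t (disagree_at \<xi>) (G, xq q, yq q))))"
    by (rule sum_weighted_avg_mu_swap)
  also have "\<dots> = (\<Sum>q\<in>Q. c q * avg_mu n d (\<lambda>G. \<alpha> q G * (2 * u * (1 - u) * meet_tail n d \<nu> t G (xq q) (yq q))))"
    using xy by (intro sum.cong refl arg_cong[where f = "\<lambda>r. c _ * r"] avg_mu_cong)
      (simp add: sum_bernoulli_semigroup_disagree_at)
  also have "\<dots> = 2 * u * (1 - u) * (\<Sum>q\<in>Q. c q * avg_mu n d (\<lambda>G. \<alpha> q G * meet_tail n d \<nu> t G (xq q) (yq q)))"
    by (simp only: mult.left_commute[of _ "2 * u * (1 - u)"] avg_mu_cmult sum_distrib_left)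
  finally show ?thesis .
qed

lemma voter_exp_xi_pair_sum_le:
  assumes Q: "finite Q" and xy: "\<And>q. q \<in> Q \<Longrightarrow> xq q < n \<and> yq q < n"
    and \<alpha>: "\<And>q. bounded (range (\<alpha> q))"
    and F: "\<And>G \<eta>. G \<in> graphs n d \<Longrightarrow> F (G, \<eta>) = (\<Sum>q\<in>Q. c q * (\<alpha> q G * disagree \<eta> (xq q) (yq q)))"
    and nonneg: "\<And>q. 0 \<le> c q" "\<And>q G. 0 \<le> \<alpha> q G" and t: "0 \<le> t"
  shows "voter_exp_xi n d \<nu> t \<xi> F
       \<le> (\<Sum>q\<in>Q. c q * avg_mu n d (\<lambda>G. \<alpha> q G * meet_tail n d \<nu> t G (xq q) (yq q)))"
proof -
  have "voter_exp_xi n d \<nu> t \<xi> F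
      = (\<Sum>q\<in>Q. c q * avg_mu n d (\<lambda>G. \<alpha> q G * semigroup (walk_stop_gen n d \<nu>) t (disagree_at \<xi>) (G, xq q, yq q)))"
    by (rule voter_exp_xi_pair_sum[OF Q xy \<alpha> F])
  also have "\<dots> \<le> (\<Sum>q\<in>Q. c q * avg_mu n d (\<lambda>G. \<alpha> q G * meet_tail n d \<nu> t G (xq q) (yq q)))"
    by (intro sum_mono mult_left_mono avg_mu_mono semigroup_disagree_at_le_meet_tail nonneg t)
  finally show ?thesis .
qed

end

section \<open>Density variance and discordance\<close>

lemma density_variance_eq_pair_sum:
  assumes "1 \<le> n"
  shows "opinion_density n \<eta> * (1 - opinion_density n \<eta>)
       = (\<Sum>q\<in>{..<n} \<times> {..<n}. 1 / (2 * real n ^ 2) * disagree \<eta> (fst q) (snd q))"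
proof -
  define e where "e x = (if \<eta> x then 1 else 0 :: real)" for x
  define k where "k = (\<Sum>x<n. e x)"
  have disagree_eq: "disagree \<eta> x y = e x + e y - 2 * e x * e y" for x y
    by (simp add: disagree_def e_def)
  have inner: "(\<Sum>y<n. e x + e y - 2 * e x * e y) = real n * e x + k - 2 * e x * k" for x
    by (simp add: sum.distrib sum_subtractf sum_distrib_left[symmetric] k_def mult.assoc)
  have outer: "(\<Sum>x<n. real n * e x + k - 2 * e x * k) = real n * k + real n * k - 2 * k * k"
    by (simp add: sum.distrib sum_subtractf sum_distrib_left[symmetric] sum_distrib_right[symmetric] k_def)
  have "(\<Sum>q\<in>{..<n} \<times> {..<n}. 1 / (2 * real n ^ 2) * disagree \<eta> (fst q) (snd q))
      = 1 / (2 * real n ^ 2) * (\<Sum>x<n. \<Sum>y<n. disagree \<eta> x y)"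
    by (simp add: sum_distrib_left sum.cartesian_product split_def)
  also have "\<dots> = 1 / (2 * real n ^ 2) * (real n * k + real n * k - 2 * k * k)"
    unfolding disagree_eq inner outer ..
  also have "\<dots> = k / real n * (1 - k / real n)"
    using assms by (simp add: field_simps power2_eq_square)
  finally show ?thesis unfolding opinion_density_def k_def e_def by simp
qed

text \<open>The index \<open>(x, y, i, j)\<close> stands for the stub pair \<open>\<sigma>\<^sub>x\<^sub>,\<^sub>i\<close>, \<open>\<sigma>\<^sub>y\<^sub>,\<^sub>j\<close> of the edge average
  defining \<open>meet_tail_edge\<close>.\<close>

definition edge_indices :: "nat \<Rightarrow> nat \<Rightarrow> (nat \<times> nat \<times> nat \<times> nat) set" where
  "edge_indices n d = Sigma {..<n} (\<lambda>x. Sigma ({..<n} - {x}) (\<lambda>y. {..<d} \<times> {..<d}))"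

definition matched :: "nat \<times> nat \<times> nat \<times> nat \<Rightarrow> graph \<Rightarrow> real" where
  "matched q G = (case q of (x, y, i, j) \<Rightarrow> if G (x, i) = (y, j) then 1 else 0)"

lemma finite_edge_indices: "finite (edge_indices n d)"
  unfolding edge_indices_def by (intro finite_SigmaI) auto

lemma sum_edge_indices:
  "(\<Sum>q\<in>edge_indices n d. f q) = (\<Sum>x<n. \<Sum>y\<in>{..<n} - {x}. \<Sum>i<d. \<Sum>j<d. f (x, y, i, j))"
  unfolding edge_indices_def by (simp add: sum.Sigma split_def)

lemma matched_nonneg: "0 \<le> matched q G"
  by (simp add: matched_def split: prod.splits)

lemma bounded_range_matched: "bounded (range (matched q))"
  unfolding bounded_iff by (intro exI[of _ 1]) (auto simp: matched_def split: prod.splits)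

lemma sum_matched_disagree:
  assumes G: "G \<in> graphs n d" and x: "x < n" and i: "i < d"
  shows "(\<Sum>y\<in>{..<n} - {x}. \<Sum>j<d. matched (x, y, i, j) G * disagree \<eta> x y) = disagree \<eta> x (nbr G x i)"
proof -
  obtain y0 j0 where g: "G (x, i) = (y0, j0)" by (cases "G (x, i)")
  have "(y0, j0) \<in> stubs n d" using graphsD(1)[OF G] g x i by (metis mem_stubs_iff)
  then have y0: "y0 < n" and j0: "j0 < d" by (simp_all add: mem_stubs_iff)
  have "(\<Sum>j<d. matched (x, y, i, j) G * disagree \<eta> x y) = (if y = y0 then disagree \<eta> x y else 0)" for y
  proof -
    have "(\<Sum>j<d. matched (x, y, i, j) G * disagree \<eta> x y) = (\<Sum>j<d. if y = y0 \<and> j = j0 then disagree \<eta> x y else 0)"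
      by (intro sum.cong refl) (auto simp: matched_def g)
    then show ?thesis using j0 by (simp add: sum.If_cases)
  qed
  then have "(\<Sum>y\<in>{..<n} - {x}. \<Sum>j<d. matched (x, y, i, j) G * disagree \<eta> x y)
      = (if y0 \<in> {..<n} - {x} then disagree \<eta> x y0 else 0)"
    by (simp add: sum.delta)
  also have "\<dots> = disagree \<eta> x y0" using y0 by (auto simp: disagree_def)
  finally show ?thesis by (simp add: nbr_def g)
qed

text \<open>The factor \<open>2\<close> in \<open>discordance\<close>: each edge is counted from both of its stubs.\<close>

lemma discordance_eq_sum_stubs:
  assumes G: "G \<in> graphs n d"
  shows "discordance n d G \<eta> = 1 / real (d * n) * (\<Sum>s\<in>stubs n d. disagree \<eta> (fst s) (fst (G s)))"
proof -
  define e where "e x = (if \<eta> x then 1 else 0 :: real)" for x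
  let ?St = "stubs n d"
  have "(\<Sum>s\<in>?St. e (fst s) * (1 - e (fst (G s)))) = (\<Sum>x<n. \<Sum>i<d. e x * (1 - e (nbr G x i)))"
    using sum_stubs_eq[where h = "\<lambda>x i. e x * (1 - e (fst (G (x, i))))"] by (simp add: nbr_def)
  also have "\<dots> = (\<Sum>x<n. (if \<eta> x then 1 else 0) * (\<Sum>i<d. if \<eta> (nbr G x i) then 0 else 1))"
    using e_def by (simp add: sum_distrib_left if_distrib[of "\<lambda>r. 1 - r"] cong: if_cong)
  finally have one_sided: "(\<Sum>x<n. (if \<eta> x then 1 else 0) * (\<Sum>i<d. if \<eta> (nbr G x i) then 0 else 1))
      = (\<Sum>s\<in>?St. e (fst s) * (1 - e (fst (G s))))" ..
  have "(\<Sum>s\<in>?St. e (fst (G s)) * (1 - e (fst s))) = (\<Sum>s\<in>?St. e (fst s) * (1 - e (fst (G s))))"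
    using sum.reindex_bij_betw[OF graph_bij_betw_stubs[OF G], of "\<lambda>s. e (fst s) * (1 - e (fst (G s)))"]
    by (simp add: graph_involution[OF G])
  moreover have "disagree \<eta> (fst s) (fst (G s)) = e (fst s) * (1 - e (fst (G s))) + e (fst (G s)) * (1 - e (fst s))"
    for s by (simp add: disagree_def e_def)
  ultimately have "(\<Sum>s\<in>?St. disagree \<eta> (fst s) (fst (G s))) = 2 * (\<Sum>s\<in>?St. e (fst s) * (1 - e (fst (G s))))"
    by (simp add: sum.distrib)
  then show ?thesis unfolding discordance_def one_sided by simp
qed

lemma discordance_eq_pair_sum:
  assumes G: "G \<in> graphs n d"
  shows "discordance n d G \<eta>
       = (\<Sum>q\<in>edge_indices n d. 1 / real (d * n) * (matched q G * disagree \<eta> (fst q) (fst (snd q))))"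
proof -
  have "discordance n d G \<eta> = 1 / real (d * n) * (\<Sum>x<n. \<Sum>i<d. disagree \<eta> x (nbr G x i))"
    unfolding discordance_eq_sum_stubs[OF G] nbr_def
    using sum_stubs_eq[where h = "\<lambda>x i. disagree \<eta> x (fst (G (x, i)))"] by simp
  also have "(\<Sum>x<n. \<Sum>i<d. disagree \<eta> x (nbr G x i))
      = (\<Sum>x<n. \<Sum>i<d. \<Sum>y\<in>{..<n} - {x}. \<Sum>j<d. matched (x, y, i, j) G * disagree \<eta> x y)"
    by (intro sum.cong refl sum_matched_disagree[OF G, symmetric]) auto
  also have "\<dots> = (\<Sum>x<n. \<Sum>y\<in>{..<n} - {x}. \<Sum>i<d. \<Sum>j<d. matched (x, y, i, j) G * disagree \<eta> x y)"
    by (intro sum.cong refl sum.swap)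
  finally show ?thesis
    unfolding sum_edge_indices by (simp add: sum_distrib_left)
qed

lemma meet_tail_edge_eq:
  "meet_tail_edge n d \<nu> t = (\<Sum>q\<in>edge_indices n d.
      1 / real (d * n) * avg_mu n d (\<lambda>G. matched q G * meet_tail n d \<nu> t G (fst q) (fst (snd q))))"
  unfolding meet_tail_edge_def sum_edge_indices sum_distrib_left
  by (intro sum.cong refl arg_cong[where f = "\<lambda>r. _ * r"] avg_mu_cong) (simp add: matched_def)

lemma meet_tail_pi_eq:
  "meet_tail_pi n d \<nu> t
     = (\<Sum>q\<in>{..<n} \<times> {..<n}. avg_mu n d (\<lambda>G. meet_tail n d \<nu> t G (fst q) (snd q))) / real n ^ 2"
  unfolding meet_tail_pi_def avg_mu_sum[symmetric]
  by (simp add: sum.cartesian_product split_def avg_mu_def sum_divide_distrib mult.commute)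

context rewiring_voter
begin

lemma voter_exp_u_density_variance:
  assumes "1 \<le> n"
  shows "voter_exp_u n d \<nu> t u (\<lambda>(G, \<eta>). opinion_density n \<eta> * (1 - opinion_density n \<eta>))
       = u * (1 - u) * meet_tail_pi n d \<nu> t"
proof -
  have "voter_exp_u n d \<nu> t u (\<lambda>(G, \<eta>). opinion_density n \<eta> * (1 - opinion_density n \<eta>))
      = 2 * u * (1 - u) * (\<Sum>q\<in>{..<n} \<times> {..<n}.
          1 / (2 * real n ^ 2) * avg_mu n d (\<lambda>G. 1 * meet_tail n d \<nu> t G (fst q) (snd q)))"
    by (rule voter_exp_u_pair_sum) (auto simp: density_variance_eq_pair_sum[OF assms])
  also have "\<dots> = u * (1 - u) * meet_tail_pi n d \<nu> t"
    unfolding meet_tail_pi_eq by (simp add: sum_distrib_left[symmetric] sum_divide_distrib[symmetric])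
  finally show ?thesis .
qed

lemma voter_exp_u_discordance:
  "voter_exp_u n d \<nu> t u (\<lambda>(G, \<eta>). discordance n d G \<eta>) = 2 * u * (1 - u) * meet_tail_edge n d \<nu> t"
  unfolding meet_tail_edge_eq
  by (rule voter_exp_u_pair_sum)
    (auto simp: finite_edge_indices edge_indices_def bounded_range_matched discordance_eq_pair_sum)

lemma voter_exp_xi_discordance_le:
  "0 \<le> t \<Longrightarrow> voter_exp_xi n d \<nu> t \<xi> (\<lambda>(G, \<eta>). discordance n d G \<eta>) \<le> meet_tail_edge n d \<nu> t"
  unfolding meet_tail_edge_eq
  by (rule voter_exp_xi_pair_sum_le)
    (auto simp: finite_edge_indices edge_indices_def bounded_range_matched discordance_eq_pair_sum
      matched_nonneg)

lemma meet_tail_edge_nonneg: "0 \<le> t \<Longrightarrow> 0 \<le> meet_tail_edge n d \<nu> t"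
  unfolding meet_tail_edge_eq
  by (intro sum_nonneg mult_nonneg_nonneg avg_mu_nonneg meet_tail_nonneg matched_nonneg) simp_all

end

theorem lemma3p1:
  fixes n d :: nat and \<nu> t u :: real
  assumes "d \<ge> 3" and "n \<ge> 1" and "even (d * n)" and "\<nu> > 0"
    and "t \<ge> 0" and "0 \<le> u" and "u \<le> 1"
  shows "voter_exp_u n d \<nu> t u
           (\<lambda>(G, \<eta>). opinion_density n \<eta> * (1 - opinion_density n \<eta>))
         = u * (1 - u) * meet_tail_pi n d \<nu> t
       \<and> voter_exp_u n d \<nu> t u (\<lambda>(G, \<eta>). discordance n d G \<eta>)
         = 2 * u * (1 - u) * meet_tail_edge n d \<nu> t
       \<and> Max ((\<lambda>\<xi>. voter_exp_xi n d \<nu> t \<xi> (\<lambda>(G, \<eta>). discordance n d G \<eta>)) ` configs n)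
         \<le> 2 * meet_tail_edge n d \<nu> t"
proof -
  have "3 * 1 \<le> d * n" using assms(1,2) by (intro mult_le_mono)
  then interpret rewiring_voter n d \<nu>
    using assms(1,4) by unfold_locales simp_all
  have "voter_exp_xi n d \<nu> t \<xi> (\<lambda>(G, \<eta>). discordance n d G \<eta>) \<le> 2 * meet_tail_edge n d \<nu> t" for \<xi>
    using voter_exp_xi_discordance_le[OF assms(5), of \<xi>] meet_tail_edge_nonneg[OF assms(5)] by linarith
  moreover have "(\<lambda>\<xi>. False) \<in> configs n" by (simp add: configs_def)
  ultimately have "Max ((\<lambda>\<xi>. voter_exp_xi n d \<nu> t \<xi> (\<lambda>(G, \<eta>). discordance n d G \<eta>)) ` configs n)
      \<le> 2 * meet_tail_edge n d \<nu> t"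
    by (subst Max_le_iff) (auto simp: finite_configs)
  then show ?thesis
    using voter_exp_u_density_variance[OF assms(2)] voter_exp_u_discordance by blast
qed

end
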